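(* Let $M\in\mathbb N$ and let $X(M)$ be the subshift defined below. Then $$\zeta^+(X(M),z)=\frac{2}{1-4Mz+\sqrt{1-8Mz^2}}\quad\text{and}\quad\zeta^-(X(M),z)=\frac{2}{1-4z+\sqrt{1-8Mz^2}}.$$
   Context: Let $\Sigma_1=\{\lambda,\xi,\rho_1,\dots,\rho_M,\eta_1,\dots,\eta_M\}$. $\mathcal M_1(M)$ is the monoid with zero generated by $\Sigma_1$ and an identity $\mathbf 1$, subject only to the relations $\lambda\rho_i=\mathbf 1$, $\lambda\eta_i=0$, $\xi\eta_i=\mathbf 1$, $\xi\rho_i=0$ ($1\le i\le M$), $\mathbf 1$ is the identity and $0$ is absorbing; no other relations. $\mathit{red}:\Sigma_1^*\to\mathcal M_1(M)$ sends a word to the product of its letters (empty word to $\mathbf 1$). $X(M)=\{x\in\Sigma_1^{\mathbb Z}:\mathit{red}(x_i\cdots x_j)\neq 0\ \forall i\le j\}$ with shift $\sigma$. $\mathcal M_1^+$ is the submonoid generated by $\rho_i,\eta_i$ and $\mathcal M_1^-$ the submonoid generated by $\lambda,\xi$. Every block $\alpha$ can be written $\alpha=\alpha_+\alpha_-$ with $\mathit{red}(\alpha_+)\in\mathcal M_1^+$, $\mathit{red}(\alpha_-)\in\mathcal M_1^-$; its multiplier is $\mathit{red}(\alpha_-\alpha_+)$, called positive if in $\mathcal M_1^+\setminus\{\mathbf 1\}$, negative if in $\mathcal M_1^-\setminus\{\mathbf 1\}$, neutral if equal to $\mathbf 1$. The multiplier of an $n$-periodic point $x$ ($\sigma^nx=x$)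 is that of its block $x_0\cdots x_{n-1}$. $p_n^+(X(M))$ (resp. $p_n^-(X(M))$) is the number of $n$-periodic points whose multiplier is positive or neutral (resp. negative or neutral), and $\zeta^\pm(X(M),z)=\exp\sum_{n\ge1}\frac{p_n^\pm(X(M))}{n}z^n$. *)

theory Defs
  imports Complex_Main
begin

datatype sym = Lam | Xi | Rho nat | Eta nat

definition alphabet :: "nat \<Rightarrow> sym set" where
  "alphabet M = {Lam, Xi} \<union> Rho ` {1..M} \<union> Eta ` {1..M}"

definition pos_letters :: "nat \<Rightarrow> sym set" where
  "pos_letters M = Rho ` {1..M} \<union> Eta ` {1..M}"

definition neg_letters :: "sym set" where
  "neg_letters = {Lam, Xi}"

text \<open>The free monoid with zero on the letters: words (Some w) together with a
  zero element None; multiplication is concatenation, None is absorbing.\<close>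
fun fmult :: "sym list option \<Rightarrow> sym list option \<Rightarrow> sym list option" where
  "fmult (Some u) (Some v) = Some (u @ v)"
| "fmult _ _ = None"

inductive mcong :: "nat \<Rightarrow> sym list option \<Rightarrow> sym list option \<Rightarrow> bool" for M where
  refl: "mcong M a a"
| sym: "mcong M a b \<Longrightarrow> mcong M b a"
| trans: "mcong M a b \<Longrightarrow> mcong M b c \<Longrightarrow> mcong M a c"
| lam_rho: "i \<in> {1..M} \<Longrightarrow> mcong M (Some [Lam, Rho i]) (Some [])"
| lam_eta: "i \<in> {1..M} \<Longrightarrow> mcong M (Some [Lam, Eta i]) None"
| xi_eta: "i \<in> {1..M} \<Longrightarrow> mcong M (Some [Xi, Eta i]) (Some [])"
| xi_rho: "i \<in> {1..M} \<Longrightarrow> mcong M (Some [Xi, Rho i]) None"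
| ctx_left: "mcong M a b \<Longrightarrow> mcong M (fmult c a) (fmult c b)"
| ctx_right: "mcong M a b \<Longrightarrow> mcong M (fmult a c) (fmult b c)"

definition mclass :: "nat \<Rightarrow> sym list option \<Rightarrow> sym list option set" where
  "mclass M a = {b. mcong M a b}"

definition mzero :: "nat \<Rightarrow> sym list option set" where
  "mzero M = mclass M None"

definition mone :: "nat \<Rightarrow> sym list option set" where
  "mone M = mclass M (Some [])"

definition red :: "nat \<Rightarrow> sym list \<Rightarrow> sym list option set" where
  "red M w = mclass M (Some w)"

definition Mplus :: "nat \<Rightarrow> sym list option set set" where
  "Mplus M = {red M u | u. set u \<subseteq> pos_letters M}"

definition Mminus :: "nat \<Rightarrow> sym list option set set" where
  "Mminus M = {red M v | v. set v \<subseteq> neg_letters}"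

definition XM :: "nat \<Rightarrow> (int \<Rightarrow> sym) set" where
  "XM M = {x. (\<forall>i. x i \<in> alphabet M) \<and>
              (\<forall>i j. i \<le> j \<longrightarrow> red M (map (\<lambda>k. x k) [i..j]) \<noteq> mzero M)}"

definition multiplier :: "nat \<Rightarrow> sym list \<Rightarrow> sym list option set" where
  "multiplier M \<alpha> =
     (let (ap, am) = (SOME (p, q). \<alpha> = p @ q \<and> red M p \<in> Mplus M \<and> red M q \<in> Mminus M)
      in red M (am @ ap))"

definition periodic :: "nat \<Rightarrow> (int \<Rightarrow> sym) \<Rightarrow> bool" where
  "periodic n x \<longleftrightarrow> (\<forall>k. x (k + int n) = x k)"

definition block :: "nat \<Rightarrow> (int \<Rightarrow> sym) \<Rightarrow> sym list" where
  "block n x = map (\<lambda>k. x (int k)) [0..<n]"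

definition is_pos_or_neutral :: "nat \<Rightarrow> sym list option set \<Rightarrow> bool" where
  "is_pos_or_neutral M m \<longleftrightarrow> m \<in> Mplus M - {mone M} \<or> m = mone M"

definition is_neg_or_neutral :: "nat \<Rightarrow> sym list option set \<Rightarrow> bool" where
  "is_neg_or_neutral M m \<longleftrightarrow> m \<in> Mminus M - {mone M} \<or> m = mone M"

definition p_plus :: "nat \<Rightarrow> nat \<Rightarrow> nat" where
  "p_plus M n = card {x \<in> XM M. periodic n x \<and> is_pos_or_neutral M (multiplier M (block n x))}"

definition p_minus :: "nat \<Rightarrow> nat \<Rightarrow> nat" where
  "p_minus M n = card {x \<in> XM M. periodic n x \<and> is_neg_or_neutral M (multiplier M (block n x))}"

definition zeta :: "(nat \<Rightarrow> nat) \<Rightarrow> complex \<Rightarrow> complex" where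
  "zeta p z = exp (\<Sum>n. of_nat (p (Suc n)) / of_nat (Suc n) * z ^ Suc n)"

end

theory Submission
  imports Defs "HOL-Analysis.Analysis"
begin

text \<open>Reduction with a stack shows that every nonzero element of \<open>M\<^sub>1(M)\<close> has a unique normal
  form: a word in the letters \<open>\<rho>\<^sub>i, \<eta>\<^sub>i\<close> followed by a word in \<open>\<lambda>, \<xi>\<close>. An
  \<open>n\<close>-periodic point is determined by its block \<open>w\<close>, and it lies in \<open>X(M)\<close> iff every power of
  \<open>w\<close> reduces to a nonzero element. For such \<open>w\<close> the multiplier is positive or neutral iff
  \<open>w\<close> has at least as many letters \<open>\<rho>\<^sub>i, \<eta>\<^sub>i\<close> as letters \<open>\<lambda>, \<xi>\<close>, and negative
  or neutral iff it has at most as many. The number of admissible blocks with a given pattern of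
  \<open>t\<close> letters \<open>\<lambda>, \<xi>\<close> and \<open>f\<close> letters \<open>\<rho>\<^sub>i, \<eta>\<^sub>i\<close> is \<open>2\<^bsup>max t f\<^esup> M\<^bsup>f\<^esup>\<close>: an
  adjacent pair \<open>\<lambda>\<rho>\<^sub>i\<close> or \<open>\<xi>\<eta>\<^sub>i\<close> contributes a factor \<open>2 M\<close> and may be cancelled,
  and rotating a block does not change admissibility. Summing over patterns,
  \<open>p\<^sub>n\<^sup>+ = P\<^sub>n(2 M, 1)\<close> and \<open>p\<^sub>n\<^sup>- = P\<^sub>n(2, M)\<close> with
  \<open>P\<^sub>n(a, b) = \<Sum>\<^bsub>2 k \<ge> n\<^esub> (n choose k) a\<^sup>k b\<^bsup>n - k\<^esup>\<close>. By Pascal's rule the generating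
  function of \<open>P\<^sub>n\<close> is a rational function of \<open>z\<close> and of the central binomial series
  \<open>T = (1 - 4 a b z\<^sup>2)\<^bsup>-1/2\<^esup>\<close>, and solving the resulting differential equation shows
  \<open>exp (\<Sum>\<^sub>n P\<^sub>n z\<^sup>n / n) = 2 / (1 - 2 a z + \<surd>(1 - 4 a b z\<^sup>2))\<close>.\<close>

section \<open>Normal forms in \<open>M\<^sub>1(M)\<close>\<close>

lemma neg_letter_not_pos [simp]: "c \<in> neg_letters \<Longrightarrow> c \<notin> pos_letters M"
  by (auto simp: neg_letters_def pos_letters_def)

lemma pos_letter_not_neg [simp]: "c \<in> pos_letters M \<Longrightarrow> c \<notin> neg_letters"
  by (auto simp: neg_letters_def pos_letters_def)

lemma alphabet_eq: "alphabet M = neg_letters \<union> pos_letters M"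
  by (auto simp: alphabet_def neg_letters_def pos_letters_def)

definition matching_pairs :: "nat \<Rightarrow> (sym \<times> sym) set" where
  "matching_pairs M = (\<lambda>i. (Lam, Rho i)) ` {1..M} \<union> (\<lambda>i. (Xi, Eta i)) ` {1..M}"

lemma matching_pairsD: "(a, c) \<in> matching_pairs M \<Longrightarrow> a \<in> neg_letters \<and> c \<in> pos_letters M"
  by (auto simp: matching_pairs_def neg_letters_def pos_letters_def)

lemma card_matching_pairs: "card (matching_pairs M) = 2 * M"
  unfolding matching_pairs_def
  by (subst card_Un_disjoint) (auto simp: card_image inj_on_def)

text \<open>Words are reduced with a stack whose top is the end of the list; \<open>None\<close> stands for
  the zero of \<open>M\<^sub>1(M)\<close>.\<close>

fun push :: "nat \<Rightarrow> sym list option \<Rightarrow> sym \<Rightarrow> sym list option" where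
  "push M None c = None"
| "push M (Some r) c =
     (if r \<noteq> [] \<and> last r \<in> neg_letters \<and> c \<in> pos_letters M
      then (if (last r, c) \<in> matching_pairs M then Some (butlast r) else None)
      else Some (r @ [c]))"

definition nf :: "nat \<Rightarrow> sym list \<Rightarrow> sym list option" where
  "nf M w = foldl (push M) (Some []) w"

fun push_all :: "nat \<Rightarrow> sym list option \<Rightarrow> sym list option \<Rightarrow> sym list option" where
  "push_all M x None = None"
| "push_all M x (Some s) = foldl (push M) x s"

lemma foldl_push_None [simp]: "foldl (push M) None w = None"
  by (induction w) auto

lemma push_all_None [simp]: "push_all M None y = None"
  by (cases y) auto

lemma nf_Nil [simp]: "nf M [] = Some []"
  by (simp add: nf_def)

lemma nf_snoc: "nf M (w @ [c]) = push M (nf M w) c"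
  by (simp add: nf_def)

lemma push_neg_pos:
  assumes "a \<in> neg_letters" "c \<in> pos_letters M"
  shows "push M (Some (r @ [a])) c = (if (a, c) \<in> matching_pairs M then Some r else None)"
  using assms by simp

lemma foldl_push_eq_push_all_nf: "foldl (push M) x w = push_all M x (nf M w)"
proof (induction w rule: rev_induct)
  case Nil
  show ?case by simp
next
  case (snoc c w)
  have "foldl (push M) x (w @ [c]) = push M (push_all M x (nf M w)) c"
    using snoc by simp
  also have "\<dots> = push_all M x (push M (nf M w) c)"
  proof (cases "nf M w")
    case (Some s)
    show ?thesis
    proof (cases "s \<noteq> [] \<and> last s \<in> neg_letters \<and> c \<in> pos_letters M")
      case True
      then obtain s' a where s: "s = s' @ [a]" and a: "a \<in> neg_letters"
        by (metis append_butlast_last_id)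
      then show ?thesis
        using Some True by (cases "foldl (push M) x s'") auto
    qed (use Some in auto)
  qed simp
  finally show ?case by (simp add: nf_snoc)
qed

lemma nf_append: "nf M (u @ v) = push_all M (nf M u) (nf M v)"
  using foldl_push_eq_push_all_nf [of M "nf M u" v] by (simp add: nf_def)

lemma nf_append_None_left: "nf M u = None \<Longrightarrow> nf M (u @ v) = None"
  by (simp add: nf_append)

lemma nf_append_None_right: "nf M v = None \<Longrightarrow> nf M (u @ v) = None"
  by (simp add: nf_append)

lemma nf_infix_nonzero: "nf M (u @ v @ t) \<noteq> None \<Longrightarrow> nf M v \<noteq> None"
  using nf_append_None_left nf_append_None_right by metis

lemma nf_fmult:
  "Option.bind (fmult a b) (nf M) = push_all M (Option.bind a (nf M)) (Option.bind b (nf M))"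
  by (cases a; cases b) (auto simp: nf_append)

lemma mcong_imp_nf_eq: "mcong M a b \<Longrightarrow> Option.bind a (nf M) = Option.bind b (nf M)"
proof (induction rule: mcong.induct)
  case (ctx_left a b c)
  then show ?case by (simp add: nf_fmult)
next
  case (ctx_right a b c)
  then show ?case by (simp add: nf_fmult)
qed (auto simp: nf_def matching_pairs_def neg_letters_def pos_letters_def)

lemma mcong_nf: "mcong M (Some w) (nf M w)"
proof (induction w rule: rev_induct)
  case Nil
  show ?case by (simp add: mcong.refl)
next
  case (snoc c w)
  have w_c: "mcong M (Some (w @ [c])) (fmult (nf M w) (Some [c]))"
    using mcong.ctx_right [OF snoc, of "Some [c]"] by simp
  show ?case
  proof (cases "nf M w")
    case None
    then show ?thesis using w_c by (simp add: nf_snoc)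
  next
    case (Some s)
    show ?thesis
    proof (cases "s \<noteq> [] \<and> last s \<in> neg_letters \<and> c \<in> pos_letters M")
      case True
      then obtain s' a where s: "s = s' @ [a]" and a: "a \<in> neg_letters" and c: "c \<in> pos_letters M"
        by (metis append_butlast_last_id)
      have "mcong M (Some [a, c]) (if (a, c) \<in> matching_pairs M then Some [] else None)"
        using a c by (auto simp: neg_letters_def pos_letters_def matching_pairs_def
            intro: mcong.lam_rho mcong.lam_eta mcong.xi_eta mcong.xi_rho)
      from mcong.ctx_left [OF this, of "Some s'"]
      have "mcong M (Some (s @ [c])) (nf M (w @ [c]))"
        using Some s a c by (auto simp: nf_snoc)
      then show ?thesis using w_c Some by (auto intro: mcong.trans)
    next
      case False
      then show ?thesis using w_c Some by (auto simp: nf_snoc)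
    qed
  qed
qed

lemma mcong_iff_nf_eq: "mcong M a b \<longleftrightarrow> Option.bind a (nf M) = Option.bind b (nf M)"
proof -
  have "mcong M a (Option.bind a (nf M))" for a
    by (cases a) (auto simp: mcong_nf mcong.refl)
  then show ?thesis
    by (metis mcong_imp_nf_eq mcong.sym mcong.trans)
qed

lemma mclass_eq_iff: "mclass M a = mclass M b \<longleftrightarrow> Option.bind a (nf M) = Option.bind b (nf M)"
  unfolding mclass_def mcong_iff_nf_eq by (auto simp: set_eq_iff)

lemma red_eq_iff: "red M u = red M v \<longleftrightarrow> nf M u = nf M v"
  by (simp add: red_def mclass_eq_iff)

lemma red_eq_mzero_iff: "red M u = mzero M \<longleftrightarrow> nf M u = None"
  by (simp add: red_def mzero_def mclass_eq_iff)

section \<open>The sign of the multiplier\<close>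

lemma foldl_push_neg: "set N \<subseteq> neg_letters \<Longrightarrow> foldl (push M) (Some r) N = Some (r @ N)"
  by (induction N arbitrary: r) auto

lemma foldl_push_pos:
  "set r \<subseteq> pos_letters M \<Longrightarrow> set P \<subseteq> pos_letters M \<Longrightarrow> foldl (push M) (Some r) P = Some (r @ P)"
proof (induction P arbitrary: r)
  case (Cons c P)
  have "r = [] \<or> last r \<in> pos_letters M" using Cons.prems(1) last_in_set by blast
  then have "push M (Some r) c = Some (r @ [c])" by auto
  then show ?case using Cons by simp
qed simp

lemma nf_pos_append_neg:
  "set P \<subseteq> pos_letters M \<Longrightarrow> set N \<subseteq> neg_letters \<Longrightarrow> nf M (P @ N) = Some (P @ N)"
  by (simp add: nf_def foldl_push_pos foldl_push_neg)

lemma red_in_Mplus_iff: "red M w \<in> Mplus M \<longleftrightarrow> (\<exists>s. nf M w = Some s \<and> set s \<subseteq> pos_letters M)"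
proof -
  have "red M w \<in> Mplus M \<longleftrightarrow> (\<exists>u. set u \<subseteq> pos_letters M \<and> nf M w = nf M u)"
    unfolding Mplus_def using red_eq_iff by blast
  then show ?thesis
    using nf_pos_append_neg [of _ M "[]"] by (metis append_Nil2 empty_subsetI set_empty)
qed

lemma red_in_Mminus_iff: "red M w \<in> Mminus M \<longleftrightarrow> (\<exists>s. nf M w = Some s \<and> set s \<subseteq> neg_letters)"
proof -
  have "red M w \<in> Mminus M \<longleftrightarrow> (\<exists>u. set u \<subseteq> neg_letters \<and> nf M w = nf M u)"
    unfolding Mminus_def using red_eq_iff by blast
  then show ?thesis
    using nf_pos_append_neg [of "[]" M] by (metis append_Nil empty_subsetI set_empty)
qed

lemma nf_pos_neg_factorization:
  assumes "set w \<subseteq> alphabet M" and "nf M w \<noteq> None"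
  shows "\<exists>p q P N. w = p @ q \<and> nf M p = Some P \<and> nf M q = Some N \<and>
           set P \<subseteq> pos_letters M \<and> set N \<subseteq> neg_letters"
  using assms
proof (induction w rule: rev_induct)
  case Nil
  show ?case by (intro exI [of _ "[]"]) simp
next
  case (snoc c w)
  have "nf M w \<noteq> None" using snoc.prems(2) by (cases "nf M w") (auto simp: nf_snoc)
  with snoc obtain p q P N where w: "w = p @ q" and p: "nf M p = Some P" and q: "nf M q = Some N"
    and P: "set P \<subseteq> pos_letters M" and N: "set N \<subseteq> neg_letters" by auto
  have nf_w: "nf M w = Some (P @ N)" using w p q N by (simp add: nf_append foldl_push_neg)
  consider "c \<in> neg_letters" | "c \<in> pos_letters M" "N = []" | "c \<in> pos_letters M" "N \<noteq> []"
    using snoc.prems(1) alphabet_eq by auto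
  then show ?case
  proof cases
    case 1
    then have "nf M (q @ [c]) = Some (N @ [c])" using q by (simp add: nf_snoc)
    then show ?thesis using w p P N 1
      by (intro exI [of _ p] exI [of _ "q @ [c]"] exI [of _ P] exI [of _ "N @ [c]"]) auto
  next
    case 2
    have "P = [] \<or> last P \<in> pos_letters M" using P last_in_set by blast
    then have "nf M (w @ [c]) = Some (P @ [c])" using nf_w 2 by (auto simp: nf_snoc)
    then show ?thesis using P 2
      by (intro exI [of _ "w @ [c]"] exI [of _ "[]"] exI [of _ "P @ [c]"] exI [of _ "[]"]) auto
  next
    case 3
    then obtain N' a where N': "N = N' @ [a]" by (metis append_butlast_last_id)
    have a: "a \<in> neg_letters" using N N' by auto
    have "nf M (w @ [c]) = (if (a, c) \<in> matching_pairs M then Some (P @ N') else None)"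
      using nf_w N' a 3 by (simp add: nf_snoc butlast_append)
    then have "(a, c) \<in> matching_pairs M" using snoc.prems(2) by (auto split: if_splits)
    then have "nf M (q @ [c]) = Some N'" using q N' a 3 by (simp add: nf_snoc)
    then show ?thesis using w p P N N'
      by (intro exI [of _ p] exI [of _ "q @ [c]"] exI [of _ P] exI [of _ N']) auto
  qed
qed

definition balance :: "nat \<Rightarrow> sym list \<Rightarrow> int" where
  "balance M w = int (length (filter (\<lambda>c. c \<in> pos_letters M) w))
                 - int (length (filter (\<lambda>c. c \<in> neg_letters) w))"

lemma balance_append [simp]: "balance M (u @ v) = balance M u + balance M v"
  by (simp add: balance_def)

lemma balance_pos_word:
  assumes "set r \<subseteq> pos_letters M"
  shows "balance M r = int (length r)"
proof -
  have "filter (\<lambda>c. c \<in> pos_letters M) r = r" "filter (\<lambda>c. c \<in> neg_letters) r = []"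
    using assms by (auto simp: filter_id_conv filter_empty_conv)
  then show ?thesis by (simp add: balance_def)
qed

lemma balance_neg_word:
  assumes "set r \<subseteq> neg_letters"
  shows "balance M r = - int (length r)"
proof -
  have "filter (\<lambda>c. c \<in> pos_letters M) r = []" "filter (\<lambda>c. c \<in> neg_letters) r = r"
    using assms by (auto simp: filter_id_conv filter_empty_conv)
  then show ?thesis by (simp add: balance_def)
qed

lemma balance_push: "push M (Some r) c = Some s \<Longrightarrow> balance M s = balance M (r @ [c])"
proof (cases "r \<noteq> [] \<and> last r \<in> neg_letters \<and> c \<in> pos_letters M")
  case True
  then obtain r' a where r: "r = r' @ [a]" and a: "a \<in> neg_letters" by (metis append_butlast_last_id)
  assume "push M (Some r) c = Some s"
  with True r a show ?thesis by (auto simp: balance_def split: if_splits)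
qed auto

lemma balance_nf: "nf M w = Some s \<Longrightarrow> balance M s = balance M w"
proof (induction w arbitrary: s rule: rev_induct)
  case (snoc c w)
  then obtain r where "nf M w = Some r" by (cases "nf M w") (auto simp: nf_snoc)
  with snoc show ?case using balance_push [of M r c s] by (simp add: nf_snoc)
qed simp

lemma foldl_push_neg_pos:
  assumes "set N \<subseteq> neg_letters" "set P \<subseteq> pos_letters M" "foldl (push M) (Some N) P = Some r"
  shows "set r \<subseteq> neg_letters \<or> set r \<subseteq> pos_letters M"
  using assms
proof (induction P arbitrary: N)
  case (Cons c P)
  show ?case
  proof (cases "N = []")
    case True
    then show ?thesis using Cons.prems foldl_push_pos [of "[c]" M P] by auto
  next
    case False
    then obtain N' a where N: "N = N' @ [a]" by (metis append_butlast_last_id)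
    then have "push M (Some N) c = (if (a, c) \<in> matching_pairs M then Some N' else None)"
      using Cons.prems(1,2) by (simp add: push_neg_pos)
    then have "foldl (push M) (Some N') P = Some r" using Cons.prems(3) by (auto split: if_splits)
    then show ?thesis using Cons.IH Cons.prems(1,2) N by auto
  qed
qed simp

lemma one_signed_balance:
  assumes "set r \<subseteq> neg_letters \<or> set r \<subseteq> pos_letters M"
  shows "(set r \<subseteq> pos_letters M \<longleftrightarrow> 0 \<le> balance M r) \<and> (set r \<subseteq> neg_letters \<longleftrightarrow> balance M r \<le> 0)"
proof (cases "r = []")
  case False
  then obtain c where c: "c \<in> set r" by (meson list.set_sel(1))
  from assms show ?thesis
  proof
    assume neg: "set r \<subseteq> neg_letters"
    then have "\<not> set r \<subseteq> pos_letters M" using c neg_letter_not_pos by blast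
    then show ?thesis using balance_neg_word [OF neg] neg False by simp
  next
    assume pos: "set r \<subseteq> pos_letters M"
    then have "\<not> set r \<subseteq> neg_letters" using c pos_letter_not_neg by blast
    then show ?thesis using balance_pos_word [OF pos] pos False by simp
  qed
qed (simp add: balance_def)

text \<open>The reduced form of \<open>q p\<close> arises from cancelling the letters \<open>\<lambda>, \<xi>\<close> of \<open>red q\<close>
  against the letters \<open>\<rho>\<^sub>i, \<eta>\<^sub>i\<close> of \<open>red p\<close>, so it contains letters of one
  kind only; its balance is that of \<open>w\<close>.\<close>

lemma red_rotation_sign:
  assumes w: "w = p @ q" and p: "red M p \<in> Mplus M" and q: "red M q \<in> Mminus M"
    and ww: "nf M (w @ w) \<noteq> None"
  shows "(red M (q @ p) \<in> Mplus M \<longleftrightarrow> 0 \<le> balance M w) \<and>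
         (red M (q @ p) \<in> Mminus M \<longleftrightarrow> balance M w \<le> 0)"
proof -
  obtain P where P: "nf M p = Some P" "set P \<subseteq> pos_letters M" using p red_in_Mplus_iff by blast
  obtain N where N: "nf M q = Some N" "set N \<subseteq> neg_letters" using q red_in_Mminus_iff by blast
  have "nf M (p @ (q @ p) @ q) \<noteq> None" using ww w by simp
  then obtain r where r: "nf M (q @ p) = Some r" using nf_infix_nonzero by blast
  then have "foldl (push M) (Some N) P = Some r" using P N by (simp add: nf_append)
  then have "set r \<subseteq> neg_letters \<or> set r \<subseteq> pos_letters M"
    using foldl_push_neg_pos P N by blast
  moreover have "balance M r = balance M w" using balance_nf [OF r] w by simp
  moreover have "red M (q @ p) \<in> Mplus M \<longleftrightarrow> set r \<subseteq> pos_letters M"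
    "red M (q @ p) \<in> Mminus M \<longleftrightarrow> set r \<subseteq> neg_letters"
    using r red_in_Mplus_iff red_in_Mminus_iff by simp_all
  ultimately show ?thesis using one_signed_balance by metis
qed

lemma multiplier_sign:
  assumes "set w \<subseteq> alphabet M" and "nf M (w @ w) \<noteq> None"
  shows "(multiplier M w \<in> Mplus M \<longleftrightarrow> 0 \<le> balance M w) \<and>
         (multiplier M w \<in> Mminus M \<longleftrightarrow> balance M w \<le> 0)"
proof -
  define F where "F = (\<lambda>(p, q). w = p @ q \<and> red M p \<in> Mplus M \<and> red M q \<in> Mminus M)"
  have "nf M w \<noteq> None" using assms(2) nf_append_None_left by metis
  then obtain p q P N where "w = p @ q" "nf M p = Some P" "nf M q = Some N"
    "set P \<subseteq> pos_letters M" "set N \<subseteq> neg_letters"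
    using nf_pos_neg_factorization [OF assms(1)] by blast
  then have "F (p, q)" unfolding F_def using red_in_Mplus_iff red_in_Mminus_iff by auto
  then have "F (SOME pq. F pq)" by (rule someI)
  moreover obtain p' q' where pq: "(SOME pq. F pq) = (p', q')" by (cases "SOME pq. F pq")
  ultimately have "w = p' @ q'" "red M p' \<in> Mplus M" "red M q' \<in> Mminus M"
    unfolding F_def by simp_all
  note rotation = red_rotation_sign [OF this assms(2)]
  have "multiplier M w = red M (q' @ p')"
    using pq unfolding multiplier_def F_def by simp
  then show ?thesis using rotation by simp
qed

section \<open>Periodic points and their blocks\<close>

definition powers_nonzero :: "nat \<Rightarrow> sym list \<Rightarrow> bool" where
  "powers_nonzero M w \<longleftrightarrow> (\<forall>k. nf M (concat (replicate k w)) \<noteq> None)"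

lemma powers_nonzero_square: "powers_nonzero M w \<Longrightarrow> nf M (w @ w) \<noteq> None"
  unfolding powers_nonzero_def by (drule spec [of _ 2]) (simp add: numeral_2_eq_2)

definition segment :: "(int \<Rightarrow> sym) \<Rightarrow> int \<Rightarrow> nat \<Rightarrow> sym list" where
  "segment x i L = map (\<lambda>k. x (i + int k)) [0..<L]"

lemma map_upto_eq_segment: "map x [i..j] = segment x i (nat (j - i + 1))"
  by (rule nth_equalityI) (simp_all add: segment_def nth_upto)

lemma segment_add: "segment x i (L1 + L2) = segment x i L1 @ segment x (i + int L1) L2"
proof -
  have "[0..<L1 + L2] = [0..<L1] @ map (\<lambda>k. k + L1) [0..<L2]"
    using upt_add_eq_append [of 0 L1 L2] map_add_upt [of L1 L2] by (simp add: add.commute)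
  then show ?thesis unfolding segment_def by (simp add: ac_simps)
qed

lemma periodic_shift:
  assumes "periodic n x"
  shows "x (i + int n * m) = x i"
proof (induction m arbitrary: i rule: int_induct [where k = 0])
  case (step1 m)
  have "x (i + int n * (m + 1)) = x ((i + int n * m) + int n)" by (simp add: algebra_simps)
  then show ?case using assms step1 by (simp add: periodic_def)
next
  case (step2 m)
  have "x (i + int n * m) = x ((i + int n * (m - 1)) + int n)" by (simp add: algebra_simps)
  then show ?case using assms step2 by (simp add: periodic_def)
qed simp

lemma periodic_mod: "periodic n x \<Longrightarrow> x (i mod int n) = x i"
  using periodic_shift [of n x "i mod int n" "i div int n"] by (simp add: mult.commute)

lemma length_block [simp]: "length (block n x) = n"
  by (simp add: block_def)

lemma periodic_eq_block_nth:
  assumes "n > 0" "periodic n x"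
  shows "x i = block n x ! nat (i mod int n)"
  using assms periodic_mod [of n x i] by (simp add: block_def nat_less_iff)

lemma segment_shift:
  assumes "periodic n x"
  shows "segment x (i + int n * m) L = segment x i L"
proof -
  have "x (i + int n * m + int k) = x (i + int k)" for k
    using periodic_shift [OF assms, of "i + int k" m] by (simp add: ac_simps)
  then show ?thesis by (simp add: segment_def)
qed

lemma segment_eq_block_power: "periodic n x \<Longrightarrow> segment x 0 (k * n) = concat (replicate k (block n x))"
proof (induction k)
  case (Suc k)
  have "segment x 0 (n + k * n) = segment x 0 n @ segment x (0 + int n * 1) (k * n)"
    by (simp add: segment_add)
  also have "\<dots> = block n x @ segment x 0 (k * n)"
    by (simp only: segment_shift [OF Suc.prems]) (simp add: segment_def block_def)
  finally show ?case using Suc by simp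
qed (simp add: segment_def)

lemma XM_powers_nonzero:
  assumes "x \<in> XM M" "periodic n x"
  shows "powers_nonzero M (block n x)"
  unfolding powers_nonzero_def
proof
  fix k
  show "nf M (concat (replicate k (block n x))) \<noteq> None"
  proof (cases "k * n = 0")
    case False
    have "concat (replicate k (block n x)) = map x [0..int (k * n) - 1]"
      using segment_eq_block_power [OF assms(2), of k] by (simp add: map_upto_eq_segment flip: of_nat_mult)
    moreover have "red M (map x [0..int (k * n) - 1]) \<noteq> mzero M"
      using assms(1) False unfolding XM_def by simp
    ultimately show ?thesis by (simp add: red_eq_mzero_iff)
  qed (auto simp: block_def)
qed

text \<open>Every segment of a periodic point is a factor of a power of its block.\<close>

lemma segment_nonzero:
  assumes "n > 0" "periodic n x" "powers_nonzero M (block n x)"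
  shows "nf M (segment x i L) \<noteq> None"
proof -
  define i0 where "i0 = nat (i mod int n)"
  have i0: "i0 < n" "int i0 = i mod int n" using assms(1) by (auto simp: i0_def nat_less_iff)
  have "segment x i L = segment x (int i0 + int n * (i div int n)) L"
    using i0(2) by (simp add: mult.commute)
  also have "\<dots> = segment x (int i0) L" by (rule segment_shift [OF assms(2)])
  finally have shift: "segment x i L = segment x (int i0) L" .
  have "L \<le> L * n" using assms(1) by simp
  moreover have "(L + 1) * n = L * n + n" by simp
  ultimately have "i0 + L \<le> (L + 1) * n" using i0(1) by linarith
  then obtain rest where rest: "(L + 1) * n = i0 + L + rest" using le_Suc_ex by blast
  have "concat (replicate (L + 1) (block n x)) = segment x 0 ((L + 1) * n)"
    by (rule segment_eq_block_power [OF assms(2), symmetric])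
  also have "\<dots> = segment x 0 (i0 + L + rest)" by (simp only: rest)
  also have "\<dots> = segment x 0 i0 @ segment x (int i0) L @ segment x (int i0 + int L) rest"
    by (simp add: segment_add)
  finally show ?thesis
    using assms(3) shift nf_infix_nonzero unfolding powers_nonzero_def by metis
qed

lemma periodic_in_XM_iff:
  assumes "n > 0" "periodic n x"
  shows "x \<in> XM M \<longleftrightarrow> set (block n x) \<subseteq> alphabet M \<and> powers_nonzero M (block n x)"
proof
  assume "x \<in> XM M"
  then show "set (block n x) \<subseteq> alphabet M \<and> powers_nonzero M (block n x)"
    using XM_powers_nonzero assms(2) by (auto simp: XM_def block_def)
next
  assume block: "set (block n x) \<subseteq> alphabet M \<and> powers_nonzero M (block n x)"
  have "x i \<in> alphabet M" for i
  proof -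
    have "nat (i mod int n) < length (block n x)" using assms(1) by (simp add: block_def nat_less_iff)
    then have "x i \<in> set (block n x)" using periodic_eq_block_nth [OF assms, of i] by simp
    then show ?thesis using block by blast
  qed
  moreover have "red M (map x [i..j]) \<noteq> mzero M" for i j
    using segment_nonzero [OF assms] block by (simp add: red_eq_mzero_iff map_upto_eq_segment)
  ultimately show "x \<in> XM M" by (simp add: XM_def)
qed

lemma bij_betw_block:
  assumes "n > 0"
  shows "bij_betw (block n) {x \<in> XM M. periodic n x \<and> P (block n x)}
           {w. length w = n \<and> set w \<subseteq> alphabet M \<and> powers_nonzero M w \<and> P w}"
proof (rule bij_betw_imageI)
  show "inj_on (block n) {x \<in> XM M. periodic n x \<and> P (block n x)}"
  proof (rule inj_onI)
    fix x y
    assume "x \<in> {x \<in> XM M. periodic n x \<and> P (block n x)}" "y \<in> {x \<in> XM M. periodic n x \<and> P (block n x)}"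
      and "block n x = block n y"
    then have "x i = y i" for i
      using periodic_eq_block_nth [OF assms, of x i] periodic_eq_block_nth [OF assms, of y i] by simp
    then show "x = y" by (rule ext)
  qed
next
  show "block n ` {x \<in> XM M. periodic n x \<and> P (block n x)} =
      {w. length w = n \<and> set w \<subseteq> alphabet M \<and> powers_nonzero M w \<and> P w}"
  proof (intro equalityI subsetI)
    fix w assume w: "w \<in> {w. length w = n \<and> set w \<subseteq> alphabet M \<and> powers_nonzero M w \<and> P w}"
    define x where "x i = w ! nat (i mod int n)" for i
    have px: "periodic n x" by (simp add: periodic_def x_def)
    have "block n x = w"
      using w by (intro nth_equalityI) (auto simp: block_def x_def)
    then show "w \<in> block n ` {x \<in> XM M. periodic n x \<and> P (block n x)}"
      using w px periodic_in_XM_iff [OF assms px] by (auto intro!: image_eqI [of _ _ x])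
  next
    fix w assume "w \<in> block n ` {x \<in> XM M. periodic n x \<and> P (block n x)}"
    then obtain x where "x \<in> XM M" "periodic n x" "P (block n x)" "w = block n x" by blast
    then show "w \<in> {w. length w = n \<and> set w \<subseteq> alphabet M \<and> powers_nonzero M w \<and> P w}"
      using periodic_in_XM_iff [OF assms \<open>periodic n x\<close>] by simp
  qed
qed

section \<open>Counting blocks by their pattern\<close>

definition pattern :: "sym list \<Rightarrow> bool list" where
  "pattern w = map (\<lambda>c. c \<in> neg_letters) w"

definition words_of_pattern :: "nat \<Rightarrow> bool list \<Rightarrow> sym list set" where
  "words_of_pattern M \<pi> = {w. set w \<subseteq> alphabet M \<and> powers_nonzero M w \<and> pattern w = \<pi>}"

lemma concat_replicate_Suc_Cons: "concat (replicate (Suc k) (c # w)) = c # concat (replicate k (w @ [c])) @ w"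
  by (induction k) auto

lemma concat_replicate_Suc_snoc: "concat (replicate (Suc k) (w @ [c])) = w @ concat (replicate k (c # w)) @ [c]"
  by (induction k) auto

lemma powers_nonzero_rotate1: "powers_nonzero M (rotate1 w) \<longleftrightarrow> powers_nonzero M w"
proof (cases w)
  case (Cons c u)
  have "nf M (concat (replicate k (u @ [c]))) \<noteq> None" if "powers_nonzero M (c # u)" for k
    using that concat_replicate_Suc_Cons [of k c u] nf_infix_nonzero [of M "[c]"] unfolding powers_nonzero_def
    by (metis append_Cons append_Nil)
  moreover have "nf M (concat (replicate k (c # u))) \<noteq> None" if "powers_nonzero M (u @ [c])" for k
    using that concat_replicate_Suc_snoc [of k u c] nf_infix_nonzero [of M u] unfolding powers_nonzero_def
    by metis
  ultimately show ?thesis using Cons by (auto simp: powers_nonzero_def)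
qed simp

lemma card_words_of_pattern_rotate1:
  "card (words_of_pattern M (rotate1 \<pi>)) = card (words_of_pattern M \<pi>)"
proof -
  have "rotate1 ` words_of_pattern M \<pi> = words_of_pattern M (rotate1 \<pi>)"
  proof (intro equalityI subsetI)
    fix v assume v: "v \<in> words_of_pattern M (rotate1 \<pi>)"
    show "v \<in> rotate1 ` words_of_pattern M \<pi>"
    proof (cases \<pi>)
      case (Cons b \<rho>)
      then have "map (\<lambda>c. c \<in> neg_letters) v = \<rho> @ [b]"
        using v by (simp add: words_of_pattern_def pattern_def)
      then obtain u c where "v = u @ [c]" "map (\<lambda>c. c \<in> neg_letters) u = \<rho>" "(c \<in> neg_letters) = b"
        by (auto simp: map_eq_append_conv)
      then show ?thesis
        using v Cons powers_nonzero_rotate1 [of M "c # u"]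
        by (auto simp: words_of_pattern_def pattern_def intro!: image_eqI [of _ _ "c # u"])
    qed (use v in \<open>auto simp: words_of_pattern_def pattern_def\<close>)
  qed (auto simp: words_of_pattern_def pattern_def powers_nonzero_rotate1 rotate1_map)
  then show ?thesis
    by (metis card_image inj_rotate1 inj_on_subset subset_UNIV)
qed

lemma nf_cancel_pair:
  assumes "a \<in> neg_letters" "c \<in> pos_letters M"
  shows "nf M (u @ [a, c] @ v) = (if (a, c) \<in> matching_pairs M then nf M (u @ v) else None)"
proof -
  have "nf M (u @ [a, c]) = (if (a, c) \<in> matching_pairs M then nf M u else None)"
  proof (cases "nf M u")
    case (Some r)
    have "nf M (u @ [a]) = Some (r @ [a])" using Some assms(1) by (simp add: nf_snoc)
    then show ?thesis
      using Some assms nf_snoc [of M "u @ [a]" c] by simp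
  qed (simp add: nf_append)
  then show ?thesis
    using nf_append [of M "u @ [a, c]" v] nf_append [of M u v] by simp
qed

lemma powers_nonzero_cancel_pair:
  assumes "a \<in> neg_letters" "c \<in> pos_letters M"
  shows "powers_nonzero M (u @ [a, c] @ v) \<longleftrightarrow> (a, c) \<in> matching_pairs M \<and> powers_nonzero M (u @ v)"
proof (cases "(a, c) \<in> matching_pairs M")
  case True
  have "nf M (concat (replicate k (u @ [a, c] @ v))) = nf M (concat (replicate k (u @ v)))" for k
  proof (induction k)
    case (Suc k)
    let ?X = "concat (replicate k (u @ [a, c] @ v))" and ?Y = "concat (replicate k (u @ v))"
    have "nf M (concat (replicate (Suc k) (u @ [a, c] @ v))) = nf M (u @ [a, c] @ (v @ ?X))"
      by simp
    also have "\<dots> = push_all M (nf M (u @ v)) (nf M ?X)"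
      using nf_cancel_pair [OF assms, of u "v @ ?X"] True by (simp flip: nf_append)
    also have "\<dots> = nf M (concat (replicate (Suc k) (u @ v)))"
      using Suc by (simp add: nf_append [of M "u @ v" ?Y, symmetric])
    finally show ?case .
  qed simp
  then show ?thesis using True by (simp add: powers_nonzero_def)
next
  case False
  then have "nf M (concat (replicate 1 (u @ [a, c] @ v))) = None"
    using nf_cancel_pair [OF assms, of u v] by simp
  then show ?thesis using False unfolding powers_nonzero_def by blast
qed

definition insert_pair :: "nat \<Rightarrow> (sym \<times> sym) \<times> sym list \<Rightarrow> sym list" where
  "insert_pair k = (\<lambda>((a, c), w). take k w @ [a, c] @ drop k w)"

lemma inj_on_insert_pair: "inj_on (insert_pair k) (UNIV \<times> {w. k \<le> length w})"
proof (rule inj_on_inverseI [where g = "\<lambda>v. ((v ! k, v ! Suc k), take k v @ drop (Suc (Suc k)) v)"])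
  fix x :: "(sym \<times> sym) \<times> sym list" assume "x \<in> UNIV \<times> {w. k \<le> length w}"
  then show "((insert_pair k x ! k, insert_pair k x ! Suc k),
      take k (insert_pair k x) @ drop (Suc (Suc k)) (insert_pair k x)) = x"
    by (auto simp: insert_pair_def nth_append min_def)
qed

lemma insert_pair_image:
  "insert_pair (length \<pi>) ` (matching_pairs M \<times> words_of_pattern M (\<pi> @ \<rho>))
     = words_of_pattern M (\<pi> @ [True, False] @ \<rho>)"
proof (intro equalityI subsetI)
  let ?k = "length \<pi>"
  fix v assume "v \<in> insert_pair ?k ` (matching_pairs M \<times> words_of_pattern M (\<pi> @ \<rho>))"
  then obtain a c w where ac: "(a, c) \<in> matching_pairs M" and w: "w \<in> words_of_pattern M (\<pi> @ \<rho>)"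
    and v: "v = take ?k w @ [a, c] @ drop ?k w" by (auto simp: insert_pair_def)
  have "map (\<lambda>c. c \<in> neg_letters) w = \<pi> @ \<rho>" using w by (simp add: words_of_pattern_def pattern_def)
  then have "map (\<lambda>c. c \<in> neg_letters) (take ?k w) = \<pi>" "map (\<lambda>c. c \<in> neg_letters) (drop ?k w) = \<rho>"
    by (metis append_eq_conv_conj take_map, metis append_eq_conv_conj drop_map)
  moreover note matching_pairsD [OF ac]
  moreover have "powers_nonzero M v"
    using powers_nonzero_cancel_pair [of a c M "take ?k w" "drop ?k w"] matching_pairsD [OF ac] ac w v
    by (simp add: words_of_pattern_def)
  ultimately show "v \<in> words_of_pattern M (\<pi> @ [True, False] @ \<rho>)"
    using v w by (auto simp: words_of_pattern_def pattern_def alphabet_eq dest: in_set_takeD in_set_dropD)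
next
  fix v assume v: "v \<in> words_of_pattern M (\<pi> @ [True, False] @ \<rho>)"
  then have "map (\<lambda>c. c \<in> neg_letters) v = \<pi> @ [True, False] @ \<rho>"
    by (simp add: words_of_pattern_def pattern_def)
  then obtain u a c u' where v_eq: "v = u @ [a, c] @ u'" and u: "map (\<lambda>c. c \<in> neg_letters) u = \<pi>"
    and a: "a \<in> neg_letters" and c: "c \<notin> neg_letters" and u': "map (\<lambda>c. c \<in> neg_letters) u' = \<rho>"
    by (auto simp: map_eq_append_conv map_eq_Cons_conv)
  have "c \<in> pos_letters M" using v v_eq c by (auto simp: words_of_pattern_def alphabet_eq)
  then have "(a, c) \<in> matching_pairs M" "powers_nonzero M (u @ u')"
    using v v_eq powers_nonzero_cancel_pair [OF a] by (auto simp: words_of_pattern_def)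
  then have "((a, c), u @ u') \<in> matching_pairs M \<times> words_of_pattern M (\<pi> @ \<rho>)"
    using v v_eq u u' by (auto simp: words_of_pattern_def pattern_def)
  moreover have "v = insert_pair (length \<pi>) ((a, c), u @ u')" using v_eq u by (auto simp: insert_pair_def)
  ultimately show "v \<in> insert_pair (length \<pi>) ` (matching_pairs M \<times> words_of_pattern M (\<pi> @ \<rho>))"
    by blast
qed

lemma card_words_of_pattern_cancel:
  "card (words_of_pattern M (\<pi> @ [True, False] @ \<rho>)) = 2 * M * card (words_of_pattern M (\<pi> @ \<rho>))"
proof -
  have "matching_pairs M \<times> words_of_pattern M (\<pi> @ \<rho>) \<subseteq> UNIV \<times> {w. length \<pi> \<le> length w}"
    by (auto simp: words_of_pattern_def pattern_def dest!: arg_cong [where f = length])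
  then have "inj_on (insert_pair (length \<pi>)) (matching_pairs M \<times> words_of_pattern M (\<pi> @ \<rho>))"
    using inj_on_insert_pair inj_on_subset by blast
  then have "card (words_of_pattern M (\<pi> @ [True, False] @ \<rho>))
      = card (matching_pairs M \<times> words_of_pattern M (\<pi> @ \<rho>))"
    by (metis card_image insert_pair_image)
  then show ?thesis by (simp add: card_cartesian_product card_matching_pairs)
qed

lemma powers_nonzero_one_signed:
  assumes "set w \<subseteq> neg_letters \<or> set w \<subseteq> pos_letters M"
  shows "powers_nonzero M w"
proof -
  have "set (concat (replicate k w)) \<subseteq> neg_letters \<or> set (concat (replicate k w)) \<subseteq> pos_letters M" for k
    using assms by (cases k) auto
  then show ?thesis
    unfolding powers_nonzero_def using nf_pos_append_neg [of "[]" M] nf_pos_append_neg [of _ M "[]"]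
    by (metis append_Nil append_Nil2 empty_subsetI option.distinct(1) set_empty)
qed

lemma pattern_eq_replicate_iff:
  "pattern w = replicate n b \<longleftrightarrow> length w = n \<and> (\<forall>c\<in>set w. (c \<in> neg_letters) = b)"
proof
  assume "pattern w = replicate n b"
  then have "length w = n" "set (pattern w) \<subseteq> {b}" by (auto simp: pattern_def dest: arg_cong [where f = length])
  then show "length w = n \<and> (\<forall>c\<in>set w. (c \<in> neg_letters) = b)" by (auto simp: pattern_def)
next
  assume "length w = n \<and> (\<forall>c\<in>set w. (c \<in> neg_letters) = b)"
  then show "pattern w = replicate n b" by (auto simp: pattern_def intro: replicate_eqI)
qed

lemma card_words_of_pattern_neg: "card (words_of_pattern M (replicate n True)) = 2 ^ n"
proof -
  have "words_of_pattern M (replicate n True) = {w. set w \<subseteq> neg_letters \<and> length w = n}"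
    using powers_nonzero_one_signed [of _ M]
    by (auto simp: words_of_pattern_def pattern_eq_replicate_iff alphabet_eq)
  moreover have "finite neg_letters" "card neg_letters = 2" by (simp_all add: neg_letters_def)
  ultimately show ?thesis by (simp add: card_lists_length_eq)
qed

lemma card_pos_letters: "card (pos_letters M) = 2 * M"
  unfolding pos_letters_def by (subst card_Un_disjoint) (auto simp: card_image inj_on_def)

lemma card_words_of_pattern_pos: "card (words_of_pattern M (replicate n False)) = (2 * M) ^ n"
proof -
  have "words_of_pattern M (replicate n False) = {w. set w \<subseteq> pos_letters M \<and> length w = n}"
    using powers_nonzero_one_signed [of _ M]
    by (auto simp: words_of_pattern_def pattern_eq_replicate_iff alphabet_eq)
  moreover have "finite (pos_letters M)" by (simp add: pos_letters_def)
  ultimately show ?thesis by (simp add: card_lists_length_eq card_pos_letters)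
qed

lemma count_list_replicate [simp]: "count_list (replicate n x) y = (if x = y then n else 0)"
  by (induction n) auto

lemma bool_list_cases:
  obtains \<pi> \<rho> where "\<sigma> = \<pi> @ [True, False] @ \<rho>"
  | d u where "\<sigma> = replicate d False @ replicate u True"
proof (induction \<sigma>)
  case Nil
  then show ?case by (metis append_Nil replicate_0)
next
  case (Cons b \<sigma>)
  show ?case
  proof (rule Cons.IH)
    fix \<pi> \<rho> assume "\<sigma> = \<pi> @ [True, False] @ \<rho>"
    then show ?thesis using Cons.prems(1) [of "b # \<pi>" \<rho>] by simp
  next
    fix d u assume du: "\<sigma> = replicate d False @ replicate u True"
    show ?thesis
    proof (cases b)
      case False
      then show ?thesis using du Cons.prems(2) [of "Suc d" u] by simp
    next
      case True
      show ?thesis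
      proof (cases d)
        case 0
        then show ?thesis using du True Cons.prems(2) [of 0 "Suc u"] by simp
      next
        case (Suc d')
        then show ?thesis
          using du True Cons.prems(1) [of "[]" "replicate d' False @ replicate u True"] by simp
      qed
    qed
  qed
qed

text \<open>Cancelling pairs \<open>[True, False]\<close> and rotating reduce every pattern to a constant one.\<close>

lemma card_words_of_pattern:
  "card (words_of_pattern M \<pi>) =
     2 ^ max (count_list \<pi> True) (count_list \<pi> False) * M ^ count_list \<pi> False"
proof (induction "length \<pi>" arbitrary: \<pi> rule: less_induct)
  case less
  let ?W = "\<lambda>\<pi>. 2 ^ max (count_list \<pi> True) (count_list \<pi> False) * M ^ count_list \<pi> False"
  have cancel: "card (words_of_pattern M \<sigma>) = ?W \<sigma>"
    if "\<sigma> = \<alpha> @ [True, False] @ \<beta>" "length \<sigma> = length \<pi>" for \<sigma> \<alpha> \<beta>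
  proof -
    have "card (words_of_pattern M (\<alpha> @ \<beta>)) = ?W (\<alpha> @ \<beta>)" using that less by simp
    then show ?thesis using that card_words_of_pattern_cancel by (simp add: power_Suc mult_ac)
  qed
  show ?case
  proof (cases \<pi> rule: bool_list_cases)
    case (1 \<alpha> \<beta>)
    then show ?thesis using cancel by blast
  next
    case (2 d u)
    show ?thesis
    proof (cases "d = 0 \<or> u = 0")
      case True
      then show ?thesis
        using 2 card_words_of_pattern_neg card_words_of_pattern_pos by (auto simp: power_mult_distrib)
    next
      case False
      then obtain d' u' where "d = Suc d'" "u = Suc u'" by (metis not0_implies_Suc)
      then have "rotate1 \<pi> = (replicate d' False @ replicate u' True) @ [True, False] @ []"
        using 2 by (simp add: replicate_append_same)
      then have "card (words_of_pattern M (rotate1 \<pi>)) = ?W (rotate1 \<pi>)" by (rule cancel) simp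
      moreover have "count_list (rotate1 \<pi>) b = count_list \<pi> b" for b
        by (cases \<pi>) simp_all
      ultimately show ?thesis by (simp add: card_words_of_pattern_rotate1)
    qed
  qed
qed

lemma count_list_True_False: "count_list \<pi> True + count_list \<pi> False = length \<pi>"
  by (induction \<pi>) auto

lemma sum_bool_lists_count:
  "(\<Sum>\<pi> | length \<pi> = n. f (count_list \<pi> True)) = (\<Sum>k\<le>n. (n choose k) * f k)"
proof (induction n arbitrary: f)
  case 0
  have "{\<pi> :: bool list. length \<pi> = 0} = {[]}" by auto
  then show ?case by simp
next
  case (Suc n)
  let ?L = "{\<pi> :: bool list. length \<pi> = n}"
  have fin: "finite ?L" using finite_lists_length_eq [of "UNIV :: bool set" n] by simp
  have split: "{\<pi> :: bool list. length \<pi> = Suc n} = Cons True ` ?L \<union> Cons False ` ?L"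
    by (auto simp: length_Suc_conv)
  have reindex: "(\<Sum>\<pi>\<in>Cons b ` ?L. f (count_list \<pi> True)) = (\<Sum>\<pi>\<in>?L. f (count_list (b # \<pi>) True))" for b
    by (subst sum.reindex) (auto simp: inj_on_def)
  have "(\<Sum>\<pi> | length \<pi> = Suc n. f (count_list \<pi> True))
      = (\<Sum>\<pi>\<in>Cons True ` ?L. f (count_list \<pi> True)) + (\<Sum>\<pi>\<in>Cons False ` ?L. f (count_list \<pi> True))"
    unfolding split by (rule sum.union_disjoint) (use fin in auto)
  also have "\<dots> = (\<Sum>\<pi>\<in>?L. f (Suc (count_list \<pi> True))) + (\<Sum>\<pi>\<in>?L. f (count_list \<pi> True))"
    by (simp add: reindex)
  also have "\<dots> = (\<Sum>k\<le>n. (n choose k) * f (Suc k)) + (\<Sum>k\<le>n. (n choose k) * f k)"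
    using Suc [of "\<lambda>k. f (Suc k)"] Suc [of f] by simp
  also have "\<dots> = (\<Sum>k\<le>Suc n. (Suc n choose k) * f k)"
  proof -
    have "(\<Sum>k\<le>n. (n choose k) * f k) = (\<Sum>k\<le>Suc n. (n choose k) * f k)" by simp
    also have "\<dots> = f 0 + (\<Sum>k\<le>n. (n choose Suc k) * f (Suc k))"
      by (subst sum.atMost_Suc_shift) simp
    finally have "(\<Sum>k\<le>n. (n choose k) * f k) = f 0 + (\<Sum>k\<le>n. (n choose Suc k) * f (Suc k))" .
    moreover have "(\<Sum>k\<le>Suc n. (Suc n choose k) * f k)
        = f 0 + (\<Sum>k\<le>n. (n choose k) * f (Suc k)) + (\<Sum>k\<le>n. (n choose Suc k) * f (Suc k))"
      by (subst sum.atMost_Suc_shift) (simp add: sum.distrib algebra_simps)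
    ultimately show ?thesis by simp
  qed
  finally show ?case .
qed

lemma balance_eq_pattern_counts:
  assumes "set w \<subseteq> alphabet M"
  shows "balance M w = int (count_list (pattern w) False) - int (count_list (pattern w) True)"
proof -
  have "filter (\<lambda>c. c \<in> pos_letters M) w = filter (\<lambda>c. c \<notin> neg_letters) w"
    using assms by (intro filter_cong) (auto simp: alphabet_eq)
  then show ?thesis
    by (simp add: balance_def pattern_def count_list_eq_length_filter filter_map comp_def)
qed

lemma length_pattern [simp]: "length (pattern w) = length w"
  by (simp add: pattern_def)

lemma card_words_by_pattern:
  "card {w. length w = n \<and> set w \<subseteq> alphabet M \<and> powers_nonzero M w \<and> Q (pattern w)}
     = (\<Sum>\<pi> | length \<pi> = n. if Q \<pi> then card (words_of_pattern M \<pi>) else 0)"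
proof -
  let ?S = "{w. length w = n \<and> set w \<subseteq> alphabet M \<and> powers_nonzero M w \<and> Q (pattern w)}"
  have "finite ?S"
  proof (rule finite_subset)
    show "?S \<subseteq> {w. set w \<subseteq> alphabet M \<and> length w = n}" by blast
    show "finite {w. set w \<subseteq> alphabet M \<and> length w = n}"
      by (rule finite_lists_length_eq) (simp add: alphabet_def)
  qed
  moreover have "finite {\<pi> :: bool list. length \<pi> = n}"
    using finite_lists_length_eq [of "UNIV :: bool set" n] by simp
  moreover have "pattern ` ?S \<subseteq> {\<pi>. length \<pi> = n}" by auto
  ultimately have "card ?S = (\<Sum>\<pi> | length \<pi> = n. \<Sum>w\<in>{w \<in> ?S. pattern w = \<pi>}. 1)"
    by (simp only: card_eq_sum sum.group)
  also have "\<dots> = (\<Sum>\<pi> | length \<pi> = n. if Q \<pi> then card (words_of_pattern M \<pi>) else 0)"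
  proof (rule sum.cong)
    fix \<pi> :: "bool list" assume "\<pi> \<in> {\<pi>. length \<pi> = n}"
    then have "{w \<in> ?S. pattern w = \<pi>} = (if Q \<pi> then words_of_pattern M \<pi> else {})"
      unfolding words_of_pattern_def by (auto dest: arg_cong [where f = length])
    then show "(\<Sum>w\<in>{w \<in> ?S. pattern w = \<pi>}. 1) = (if Q \<pi> then card (words_of_pattern M \<pi>) else 0)"
      by simp
  qed simp
  finally show ?thesis .
qed

lemma card_periodic_points_by_balance:
  assumes "n > 0"
    and sign: "\<And>w. set w \<subseteq> alphabet M \<Longrightarrow> nf M (w @ w) \<noteq> None \<Longrightarrow>
                P (multiplier M w) \<longleftrightarrow> R (balance M w)"
  shows "card {x \<in> XM M. periodic n x \<and> P (multiplier M (block n x))}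
    = (\<Sum>k\<le>n. (n choose k) *
         (if R (int (n - k) - int k) then 2 ^ max k (n - k) * M ^ (n - k) else 0))"
proof -
  let ?Q = "\<lambda>\<pi>. R (int (count_list \<pi> False) - int (count_list \<pi> True))"
  have "card {x \<in> XM M. periodic n x \<and> P (multiplier M (block n x))}
      = card {w. length w = n \<and> set w \<subseteq> alphabet M \<and> powers_nonzero M w \<and> P (multiplier M w)}"
    by (rule bij_betw_same_card [OF bij_betw_block [OF assms(1)]])
  also have "\<dots> = card {w. length w = n \<and> set w \<subseteq> alphabet M \<and> powers_nonzero M w \<and> ?Q (pattern w)}"
  proof (rule arg_cong [where f = card], rule Collect_cong)
    fix w
    show "(length w = n \<and> set w \<subseteq> alphabet M \<and> powers_nonzero M w \<and> P (multiplier M w)) \<longleftrightarrow>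
        (length w = n \<and> set w \<subseteq> alphabet M \<and> powers_nonzero M w \<and> ?Q (pattern w))"
      using sign [of w] powers_nonzero_square [of M w] balance_eq_pattern_counts [of w M] by auto
  qed
  also have "\<dots> = (\<Sum>\<pi> | length \<pi> = n. if ?Q \<pi> then card (words_of_pattern M \<pi>) else 0)"
    by (rule card_words_by_pattern)
  also have "\<dots> = (\<Sum>\<pi> | length \<pi> = n. (\<lambda>k. if R (int (n - k) - int k)
                      then 2 ^ max k (n - k) * M ^ (n - k) else 0) (count_list \<pi> True))"
  proof (rule sum.cong)
    fix \<pi> :: "bool list" assume "\<pi> \<in> {\<pi>. length \<pi> = n}"
    then have "count_list \<pi> False = n - count_list \<pi> True"
      using count_list_True_False [of \<pi>] by simp
    then show "(if ?Q \<pi> then card (words_of_pattern M \<pi>) else 0) = (\<lambda>k. if R (int (n - k) - int k)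
                      then 2 ^ max k (n - k) * M ^ (n - k) else 0) (count_list \<pi> True)"
      by (simp add: card_words_of_pattern)
  qed simp
  also have "\<dots> = (\<Sum>k\<le>n. (n choose k) *
         (if R (int (n - k) - int k) then 2 ^ max k (n - k) * M ^ (n - k) else 0))"
    by (rule sum_bool_lists_count)
  finally show ?thesis .
qed

definition upper_binomial :: "'a::comm_semiring_1 \<Rightarrow> 'a \<Rightarrow> nat \<Rightarrow> 'a" where
  "upper_binomial a b n = (\<Sum>k\<le>n. if n \<le> 2 * k then of_nat (n choose k) * a ^ k * b ^ (n - k) else 0)"

lemma is_pos_or_neutral_iff: "is_pos_or_neutral M m \<longleftrightarrow> m \<in> Mplus M"
proof -
  have "mone M \<in> Mplus M" unfolding Mplus_def mone_def red_def by auto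
  then show ?thesis by (auto simp: is_pos_or_neutral_def)
qed

lemma is_neg_or_neutral_iff: "is_neg_or_neutral M m \<longleftrightarrow> m \<in> Mminus M"
proof -
  have "mone M \<in> Mminus M" unfolding Mminus_def mone_def red_def by auto
  then show ?thesis by (auto simp: is_neg_or_neutral_def)
qed

lemma p_plus_eq_upper_binomial:
  assumes "n > 0"
  shows "p_plus M n = upper_binomial (2 * M) 1 n"
proof -
  have "p_plus M n = (\<Sum>k\<le>n. (n choose k) *
          (if 0 \<le> int (n - k) - int k then 2 ^ max k (n - k) * M ^ (n - k) else 0))"
    unfolding p_plus_def
    by (rule card_periodic_points_by_balance [OF assms]) (simp add: is_pos_or_neutral_iff multiplier_sign)
  also have "\<dots> = (\<Sum>k\<le>n. (n choose (n - k)) *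
          (if 0 \<le> int k - int (n - k) then 2 ^ max (n - k) k * M ^ k else 0))"
    by (rule sum.reindex_bij_witness [where i = "\<lambda>k. n - k" and j = "\<lambda>k. n - k"]) auto
  also have "\<dots> = upper_binomial (2 * M) 1 n"
    unfolding upper_binomial_def
  proof (rule sum.cong)
    fix k assume "k \<in> {..n}"
    then have "k \<le> n" by simp
    then have "n choose (n - k) = n choose k" "0 \<le> int k - int (n - k) \<longleftrightarrow> n \<le> 2 * k"
      "n \<le> 2 * k \<Longrightarrow> max (n - k) k = k"
      by (auto simp: binomial_symmetric [symmetric])
    then show "(n choose (n - k)) * (if 0 \<le> int k - int (n - k) then 2 ^ max (n - k) k * M ^ k else 0)
        = (if n \<le> 2 * k then of_nat (n choose k) * (2 * M) ^ k * 1 ^ (n - k) else 0)"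
      by (simp add: power_mult_distrib)
  qed simp
  finally show ?thesis .
qed

lemma p_minus_eq_upper_binomial:
  assumes "n > 0"
  shows "p_minus M n = upper_binomial 2 M n"
proof -
  have "p_minus M n = (\<Sum>k\<le>n. (n choose k) *
          (if int (n - k) - int k \<le> 0 then 2 ^ max k (n - k) * M ^ (n - k) else 0))"
    unfolding p_minus_def
    by (rule card_periodic_points_by_balance [OF assms]) (simp add: is_neg_or_neutral_iff multiplier_sign)
  also have "\<dots> = upper_binomial 2 M n"
    unfolding upper_binomial_def
  proof (rule sum.cong)
    fix k assume "k \<in> {..n}"
    then have "int (n - k) - int k \<le> 0 \<longleftrightarrow> n \<le> 2 * k" "n \<le> 2 * k \<Longrightarrow> max k (n - k) = k"
      by auto
    then show "(n choose k) * (if int (n - k) - int k \<le> 0 then 2 ^ max k (n - k) * M ^ (n - k) else 0)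
        = (if n \<le> 2 * k then of_nat (n choose k) * 2 ^ k * M ^ (n - k) else 0)"
      by simp
  qed simp
  finally show ?thesis .
qed

section \<open>The generating function\<close>

definition central_term :: "'a::comm_semiring_1 \<Rightarrow> 'a \<Rightarrow> nat \<Rightarrow> 'a" where
  "central_term a b n = (if even n then of_nat (n choose (n div 2)) * (a * b) ^ (n div 2) else 0)"

lemma of_nat_upper_binomial:
  "of_nat (upper_binomial a b n) = upper_binomial (of_nat a) (of_nat b) n"
  unfolding upper_binomial_def of_nat_sum by (intro sum.cong) auto

lemma upper_binomial_0 [simp]: "upper_binomial a b 0 = 1"
  by (simp add: upper_binomial_def)

lemma sum_even_diagonal:
  "(\<Sum>k\<le>n. if n = 2 * k then of_nat (n choose k) * a ^ k * b ^ (n - k) else 0) = central_term a b n"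
proof (cases "even n")
  case True
  then obtain m where m: "n = 2 * m" by blast
  then have "(\<Sum>k\<le>n. if n = 2 * k then of_nat (n choose k) * a ^ k * b ^ (n - k) else 0)
      = of_nat (n choose m) * a ^ m * b ^ (n - m)"
    by (simp add: sum.delta [of _ m, simplified])
  also have "\<dots> = central_term a b n" using m by (simp add: central_term_def power_mult_distrib mult_2 mult.assoc)
  finally show ?thesis .
qed (auto simp: central_term_def intro!: sum.neutral)

lemma sum_odd_diagonal:
  fixes a b :: "'a::field_char_0"
  shows "(\<Sum>k\<le>n. if n = Suc (2 * k) then of_nat (n choose k) * a ^ Suc k * b ^ (n - k) else 0)
           = central_term a b (Suc n) / 2"
proof (cases "odd n")
  case True
  then obtain m where m: "n = 2 * m + 1" by (metis oddE)
  then have "(\<Sum>k\<le>n. if n = Suc (2 * k) then of_nat (n choose k) * a ^ Suc k * b ^ (n - k) else 0)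
      = of_nat (n choose m) * (a * b) ^ Suc m"
    by (simp add: sum.delta [of _ m, simplified] power_mult_distrib)
  also have "\<dots> = central_term a b (Suc n) / 2"
  proof -
    have "n choose Suc m = n choose m" using m binomial_symmetric [of "Suc m" n] by simp
    then have "Suc n choose Suc m = 2 * (n choose m)" using m by simp
    then show ?thesis using m by (simp add: central_term_def)
  qed
  finally show ?thesis .
qed (auto simp: central_term_def intro!: sum.neutral)

lemma upper_binomial_Suc_left_terms:
  fixes a b :: "'a::field_char_0"
  shows "(\<Sum>k\<le>n. if n \<le> 2 * k + 1 then of_nat (n choose k) * a ^ Suc k * b ^ (n - k) else 0)
           = a * upper_binomial a b n + central_term a b (Suc n) / 2"
proof -
  define X where "X k = (if n \<le> 2 * k + 1 then of_nat (n choose k) * a ^ Suc k * b ^ (n - k) else 0)" for k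
  have "X k = a * (if n \<le> 2 * k then of_nat (n choose k) * a ^ k * b ^ (n - k) else 0)
      + (if n = Suc (2 * k) then of_nat (n choose k) * a ^ Suc k * b ^ (n - k) else 0)" for k
    by (auto simp: X_def)
  then have "(\<Sum>k\<le>n. X k) = a * upper_binomial a b n + central_term a b (Suc n) / 2"
    by (simp add: upper_binomial_def sum.distrib sum_distrib_left sum_odd_diagonal)
  then show ?thesis by (simp only: X_def)
qed

lemma upper_binomial_Suc_right_terms:
  fixes a b :: "'a::field_char_0"
  shows "(\<Sum>k\<le>n. if n \<le> 2 * k + 1 then of_nat (n choose Suc k) * a ^ Suc k * b ^ (n - k) else 0)
           = b * (upper_binomial a b n - central_term a b n)"
proof -
  define Y where "Y k = (if n \<le> 2 * k + 1 then of_nat (n choose Suc k) * a ^ Suc k * b ^ (n - k) else 0)" for k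
  define Z where "Z k = (if Suc n \<le> 2 * k then of_nat (n choose k) * a ^ k * b ^ (Suc n - k) else 0)" for k
  have "(\<Sum>k\<le>n. Y k) = (\<Sum>k\<le>Suc n. Z k)"
    by (subst sum.atMost_Suc_shift) (auto simp: Z_def Y_def intro!: sum.cong)
  also have "\<dots> = (\<Sum>k\<le>n. Z k)" by (simp add: Z_def)
  also have "\<dots> = (\<Sum>k\<le>n. b * ((if n \<le> 2 * k then of_nat (n choose k) * a ^ k * b ^ (n - k) else 0)
      - (if n = 2 * k then of_nat (n choose k) * a ^ k * b ^ (n - k) else 0)))"
  proof (rule sum.cong)
    fix k assume "k \<in> {..n}"
    then have "b ^ (Suc n - k) = b * b ^ (n - k)" by (simp add: Suc_diff_le)
    then show "Z k = b * ((if n \<le> 2 * k then of_nat (n choose k) * a ^ k * b ^ (n - k) else 0)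
        - (if n = 2 * k then of_nat (n choose k) * a ^ k * b ^ (n - k) else 0))"
      by (auto simp: Z_def algebra_simps)
  qed simp
  also have "\<dots> = b * (upper_binomial a b n - central_term a b n)"
    by (simp add: upper_binomial_def sum_distrib_left [symmetric] sum_subtractf sum_even_diagonal)
  finally show ?thesis by (simp only: Y_def)
qed

text \<open>Pascal's rule splits each term of \<open>upper_binomial a b (n + 1)\<close> into a term of each of the
  two sums above.\<close>

lemma upper_binomial_Suc:
  fixes a b :: "'a::field_char_0"
  shows "upper_binomial a b (Suc n)
           = (a + b) * upper_binomial a b n + central_term a b (Suc n) / 2 - b * central_term a b n"
proof -
  define X where "X k = (if n \<le> 2 * k + 1 then of_nat (n choose k) * a ^ Suc k * b ^ (n - k) else 0)" for k
  define Y where "Y k = (if n \<le> 2 * k + 1 then of_nat (n choose Suc k) * a ^ Suc k * b ^ (n - k) else 0)" for k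
  have "upper_binomial a b (Suc n)
      = (\<Sum>k\<le>n. if Suc n \<le> 2 * Suc k then of_nat (Suc n choose Suc k) * a ^ Suc k * b ^ (Suc n - Suc k) else 0)"
    unfolding upper_binomial_def by (subst sum.atMost_Suc_shift) simp
  also have "\<dots> = (\<Sum>k\<le>n. X k + Y k)"
    by (rule sum.cong) (simp_all add: X_def Y_def algebra_simps)
  also have "\<dots> = (\<Sum>k\<le>n. X k) + (\<Sum>k\<le>n. Y k)"
    by (rule sum.distrib)
  also have "\<dots> = a * upper_binomial a b n + central_term a b (Suc n) / 2
      + b * (upper_binomial a b n - central_term a b n)"
    unfolding X_def Y_def upper_binomial_Suc_left_terms upper_binomial_Suc_right_terms ..
  finally show ?thesis by (simp add: algebra_simps)
qed

lemma binomial_central_Suc: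
  "Suc i * (2 * i + 2 choose Suc i) = 2 * (2 * i + 1) * (2 * i choose i)"
proof -
  have odd: "Suc i * (Suc (2 * i + 1) choose Suc i) = Suc (2 * i + 1) * (2 * i + 1 choose i)"
    by (rule Suc_times_binomial)
  have even: "Suc i * (Suc (2 * i) choose Suc i) = Suc (2 * i) * (2 * i choose i)"
    by (rule Suc_times_binomial)
  have sym: "Suc (2 * i) choose Suc i = 2 * i + 1 choose i"
    using binomial_symmetric [of "Suc i" "Suc (2 * i)"] by simp
  from odd have "Suc i * (2 * i + 2 choose Suc i) = 2 * (Suc i * (2 * i + 1 choose i))"
    by (simp del: binomial_Suc_Suc)
  also have "Suc i * (2 * i + 1 choose i) = Suc (2 * i) * (2 * i choose i)"
    using even sym by (simp del: binomial_Suc_Suc)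
  finally show ?thesis by simp
qed

lemma central_term_rec:
  fixes a b :: "'a::comm_semiring_1"
  shows "of_nat (m + 2) * central_term a b (m + 2) = 4 * a * b * (of_nat (m + 1) * central_term a b m)"
proof (cases "even m")
  case True
  define i where "i = m div 2"
  have m: "m = 2 * i" using True by (simp add: i_def)
  have "(m + 2) * (m + 2 choose Suc i) = 2 * (Suc i * (2 * i + 2 choose Suc i))"
    unfolding m by (simp add: algebra_simps del: binomial_Suc_Suc)
  also have "\<dots> = 4 * (m + 1) * (m choose i)"
    unfolding binomial_central_Suc m by (simp add: algebra_simps)
  finally have binomial_eq: "(m + 2) * (m + 2 choose Suc i) = 4 * (m + 1) * (m choose i)" .
  have "central_term a b (m + 2) = of_nat (m + 2 choose Suc i) * (a * b) ^ Suc i"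
    using m by (simp add: central_term_def del: binomial_Suc_Suc)
  then have "of_nat (m + 2) * central_term a b (m + 2)
      = of_nat ((m + 2) * (m + 2 choose Suc i)) * (a * b) ^ Suc i"
    by (simp only: of_nat_mult mult.assoc)
  also have "\<dots> = of_nat (4 * (m + 1) * (m choose i)) * (a * b) ^ Suc i"
    by (simp only: binomial_eq)
  also have "\<dots> = 4 * a * b * (of_nat (m + 1) * (of_nat (m choose i) * (a * b) ^ i))"
    by (simp add: algebra_simps)
  also have "of_nat (m choose i) * (a * b) ^ i = central_term a b m"
    using m by (simp add: central_term_def)
  finally show ?thesis .
qed (simp add: central_term_def)

lemma fps_conv_radius_Abs_fps_ge:
  fixes c :: "nat \<Rightarrow> 'a::{banach, real_normed_div_algebra}"
  assumes "K > 0" and "\<And>n. norm (c n) \<le> K ^ n"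
  shows "ereal (1 / K) \<le> fps_conv_radius (Abs_fps c)"
  unfolding fps_conv_radius_def fps_nth_Abs_fps
proof (rule conv_radius_geI_ex')
  fix r :: real assume r: "0 < r" "ereal r < ereal (1 / K)"
  then have "K * r < 1" using assms(1) by (simp add: field_simps)
  show "summable (\<lambda>n. c n * of_real r ^ n)"
  proof (rule summable_comparison_test)
    show "\<exists>N. \<forall>n\<ge>N. norm (c n * of_real r ^ n) \<le> (K * r) ^ n"
      using assms(2) r by (auto simp: norm_mult norm_power power_mult_distrib intro!: mult_right_mono)
    show "summable (\<lambda>n. (K * r) ^ n)"
      using \<open>K * r < 1\<close> assms(1) r by (intro summable_geometric) simp
  qed
qed

definition coeff_growth :: "complex \<Rightarrow> complex \<Rightarrow> real" where
  "coeff_growth a b = 2 * (norm a + norm b + 1)"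

lemma coeff_growth_pos: "coeff_growth a b > 0"
  by (simp add: coeff_growth_def add_nonneg_pos)

lemma norm_upper_binomial_le: "norm (upper_binomial a b n) \<le> coeff_growth a b ^ n"
proof -
  have "norm (upper_binomial a b n)
      \<le> (\<Sum>k\<le>n. real (n choose k) * norm a ^ k * norm b ^ (n - k))"
    unfolding upper_binomial_def
    by (rule order_trans [OF norm_sum sum_mono]) (simp add: norm_mult norm_power)
  also have "\<dots> = (norm a + norm b) ^ n" by (simp add: binomial_ring)
  also have "\<dots> \<le> coeff_growth a b ^ n" unfolding coeff_growth_def by (rule power_mono) auto
  finally show ?thesis .
qed

lemma norm_central_term_le: "norm (central_term a b n) \<le> coeff_growth a b ^ n"
proof (cases "even n")
  case True
  let ?m = "n div 2" and ?K = "norm a + norm b + 1"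
  have "norm a * norm b \<le> ?K ^ 2" by (simp add: power2_eq_square algebra_simps)
  then have "(norm a * norm b) ^ ?m \<le> (?K ^ 2) ^ ?m" by (rule power_mono) simp
  also have "\<dots> = ?K ^ n" using True by (simp flip: power_mult)
  finally have "(norm a * norm b) ^ ?m \<le> ?K ^ n" .
  moreover have "real (n choose ?m) \<le> 2 ^ n"
    using binomial_le_pow2 [of n ?m] by (simp flip: of_nat_le_iff)
  ultimately have "real (n choose ?m) * (norm a * norm b) ^ ?m \<le> 2 ^ n * ?K ^ n"
    by (intro mult_mono) auto
  also have "\<dots> = coeff_growth a b ^ n"
    unfolding coeff_growth_def by (simp only: power_mult_distrib)
  finally show ?thesis
    using True by (simp add: central_term_def norm_mult norm_power power_mult_distrib)
qed (simp add: central_term_def less_imp_le [OF coeff_growth_pos])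

definition central_fps :: "complex \<Rightarrow> complex \<Rightarrow> complex fps" where
  "central_fps a b = Abs_fps (central_term a b)"

definition upper_binomial_fps :: "complex \<Rightarrow> complex \<Rightarrow> complex fps" where
  "upper_binomial_fps a b = Abs_fps (upper_binomial a b)"

text \<open>The exponential of this series is the zeta function; its constant coefficient is
  \<open>1 / 0 = 0\<close>.\<close>

definition upper_binomial_log_fps :: "complex \<Rightarrow> complex \<Rightarrow> complex fps" where
  "upper_binomial_log_fps a b = Abs_fps (\<lambda>n. upper_binomial a b n / of_nat n)"

lemma fps_conv_radius_central_fps: "ereal (1 / coeff_growth a b) \<le> fps_conv_radius (central_fps a b)"
  unfolding central_fps_def
  by (rule fps_conv_radius_Abs_fps_ge [OF coeff_growth_pos norm_central_term_le])

lemma fps_conv_radius_upper_binomial_fps: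
  "ereal (1 / coeff_growth a b) \<le> fps_conv_radius (upper_binomial_fps a b)"
  unfolding upper_binomial_fps_def
  by (rule fps_conv_radius_Abs_fps_ge [OF coeff_growth_pos norm_upper_binomial_le])

lemma fps_conv_radius_upper_binomial_log_fps:
  "ereal (1 / coeff_growth a b) \<le> fps_conv_radius (upper_binomial_log_fps a b)"
  unfolding upper_binomial_log_fps_def
proof (rule fps_conv_radius_Abs_fps_ge [OF coeff_growth_pos])
  fix n
  have "norm (upper_binomial a b n / of_nat n) \<le> norm (upper_binomial a b n)"
    by (cases n) (simp_all add: norm_divide divide_le_eq mult_le_cancel_left1 del: of_nat_Suc)
  then show "norm (upper_binomial a b n / of_nat n) \<le> coeff_growth a b ^ n"
    using norm_upper_binomial_le order_trans by blast
qed

lemma fps_of_poly_pCons_mult: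
  fixes f :: "'a::comm_ring_1 fps"
  shows "fps_of_poly (pCons c p) * f = fps_const c * f + fps_X * (fps_of_poly p * f)"
  by (simp add: fps_of_poly_pCons ring_distribs mult_ac)

lemma fps_nth_poly_pCons_mult_0 [simp]:
  fixes f :: "'a::comm_ring_1 fps"
  shows "fps_nth (fps_of_poly (pCons c p) * f) 0 = c * fps_nth f 0"
  by (simp add: fps_of_poly_pCons_mult)

lemma fps_nth_poly_pCons_mult_Suc [simp]:
  fixes f :: "'a::comm_ring_1 fps"
  shows "fps_nth (fps_of_poly (pCons c p) * f) (Suc n) = c * fps_nth f (Suc n) + fps_nth (fps_of_poly p * f) n"
  by (simp add: fps_of_poly_pCons_mult)

lemma fps_nth_poly_const_mult [simp]:
  fixes f :: "'a::comm_ring_1 fps"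
  shows "fps_nth (fps_of_poly [:c:] * f) n = c * fps_nth f n"
  by (simp add: fps_of_poly_const)

lemma central_fps_ode:
  "fps_of_poly [:1, 0, - (4 * a * b):] * fps_deriv (central_fps a b)
     = fps_of_poly [:0, 4 * a * b:] * central_fps a b"
proof (rule fps_ext)
  fix n
  let ?c = "central_term a b"
  show "fps_nth (fps_of_poly [:1, 0, - (4 * a * b):] * fps_deriv (central_fps a b)) n
      = fps_nth (fps_of_poly [:0, 4 * a * b:] * central_fps a b) n"
  proof (cases n)
    case 0
    then show ?thesis by (simp add: central_fps_def central_term_def)
  next
    case (Suc m)
    show ?thesis
    proof (cases m)
      case 0
      have "?c (Suc (Suc 0)) = 2 * (a * b)" by (simp add: central_term_def)
      then show ?thesis using Suc 0 by (simp add: central_fps_def central_term_def)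
    next
      case (Suc k)
      have "of_nat (k + 3) * ?c (k + 3) = 4 * a * b * (of_nat (k + 2) * ?c (k + 1))"
        using central_term_rec [of "k + 1" a b] by (simp add: numeral_eq_Suc)
      moreover have "fps_nth (fps_of_poly [:1, 0, - (4 * a * b):] * fps_deriv (central_fps a b)) n
          = of_nat (k + 3) * ?c (k + 3) - 4 * a * b * (of_nat (k + 1) * ?c (k + 1))"
        using \<open>n = Suc m\<close> Suc by (simp add: central_fps_def numeral_eq_Suc)
      moreover have "fps_nth (fps_of_poly [:0, 4 * a * b:] * central_fps a b) n = 4 * a * b * ?c (k + 1)"
        using \<open>n = Suc m\<close> Suc by (simp add: central_fps_def)
      ultimately show ?thesis by (simp add: algebra_simps)
    qed
  qed
qed

lemma upper_binomial_fps_eq: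
  "fps_of_poly [:1, - (a + b):] * upper_binomial_fps a b
     = fps_of_poly [:1 / 2, - b:] * central_fps a b + fps_of_poly [:1 / 2:]"
proof (rule fps_ext)
  fix n
  show "fps_nth (fps_of_poly [:1, - (a + b):] * upper_binomial_fps a b) n
      = fps_nth (fps_of_poly [:1 / 2, - b:] * central_fps a b + fps_of_poly [:1 / 2:]) n"
  proof (cases n)
    case 0
    then show ?thesis by (simp add: upper_binomial_fps_def central_fps_def central_term_def)
  next
    case (Suc m)
    have "upper_binomial a b (Suc m) - (a + b) * upper_binomial a b m
        = central_term a b (Suc m) / 2 - b * central_term a b m"
      by (simp add: upper_binomial_Suc)
    then show ?thesis using Suc
      by (simp add: upper_binomial_fps_def central_fps_def) (simp add: algebra_simps)
  qed
qed

lemma upper_binomial_log_fps_deriv: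
  "fps_of_poly [:0, 1:] * fps_deriv (upper_binomial_log_fps a b)
     = fps_of_poly 1 * upper_binomial_fps a b + fps_of_poly [:- 1:]"
proof (rule fps_ext)
  fix n
  show "fps_nth (fps_of_poly [:0, 1:] * fps_deriv (upper_binomial_log_fps a b)) n
      = fps_nth (fps_of_poly 1 * upper_binomial_fps a b + fps_of_poly [:- 1:]) n"
    by (cases n) (simp_all add: upper_binomial_fps_def upper_binomial_log_fps_def del: of_nat_Suc)
qed

lemma eval_fps_poly_identity:
  fixes f g :: "complex fps"
  assumes "fps_of_poly p * f = fps_of_poly q * g + fps_of_poly r"
    and "ereal (norm z) < fps_conv_radius f" and "ereal (norm z) < fps_conv_radius g"
  shows "poly p z * eval_fps f z = poly q z * eval_fps g z + poly r z"
proof -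
  have "ereal (norm z) < fps_conv_radius (fps_of_poly q * g)"
    using assms(3) fps_conv_radius_mult [of "fps_of_poly q" g] by (simp add: less_le_trans)
  then have "eval_fps (fps_of_poly q * g + fps_of_poly r) z = poly q z * eval_fps g z + poly r z"
    using assms(3) by (simp add: eval_fps_add eval_fps_mult)
  moreover have "eval_fps (fps_of_poly p * f) z = poly p z * eval_fps f z"
    using assms(2) by (simp add: eval_fps_mult)
  ultimately show ?thesis using assms(1) by simp
qed

lemma eq_at_0_if_deriv_zero_on_ball:
  fixes f :: "complex \<Rightarrow> complex"
  assumes "\<And>x. norm x < r \<Longrightarrow> (f has_field_derivative 0) (at x)" and "norm z < r"
  shows "f z = f 0"
proof -
  have "\<exists>c. \<forall>x\<in>ball 0 r. f x = c"
    by (rule has_field_derivative_zero_constant) (auto intro: has_field_derivative_at_within assms(1))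
  moreover have "0 < r" using assms(2) norm_ge_zero [of z] by linarith
  then have "z \<in> ball 0 r" "0 \<in> ball 0 r" using assms(2) by auto
  ultimately show ?thesis by metis
qed

definition expansion_radius :: "complex \<Rightarrow> complex \<Rightarrow> real" where
  "expansion_radius a b = 1 / (2 * coeff_growth a b)"

lemma expansion_radius_pos: "expansion_radius a b > 0"
  using coeff_growth_pos [of a b] by (simp add: expansion_radius_def)

lemma expansion_radius_lt_conv_radius:
  assumes "norm z < expansion_radius a b" and "ereal (1 / coeff_growth a b) \<le> fps_conv_radius f"
  shows "ereal (norm z) < fps_conv_radius f"
proof -
  have "expansion_radius a b \<le> 1 / coeff_growth a b"
    using coeff_growth_pos [of a b] by (simp add: expansion_radius_def field_simps)
  then have "ereal (norm z) < ereal (1 / coeff_growth a b)" using assms(1) by simp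
  then show ?thesis using assms(2) by (rule less_le_trans)
qed

lemma expansion_radius_bounds:
  assumes "norm z < expansion_radius a b"
  shows "norm (4 * a * b * z ^ 2) < 1" "norm (2 * a * z) < 1" "norm ((a + b) * z) < 1"
proof -
  let ?K = "norm a + norm b + 1"
  have "0 < ?K" by (simp add: add_nonneg_pos)
  moreover have "norm z < 1 / (4 * ?K)"
    using assms by (simp add: expansion_radius_def coeff_growth_def)
  ultimately have K: "?K * norm z < 1 / 4" by (simp add: field_simps)
  have "norm a * norm z \<le> ?K * norm z" "norm b * norm z \<le> ?K * norm z"
    by (simp_all add: mult_right_mono)
  then have a: "norm a * norm z < 1 / 4" and b: "norm b * norm z < 1 / 4" using K by linarith+
  have "(norm a * norm z) * (norm b * norm z) < (1 / 4) * (1 / 4)"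
    by (rule mult_strict_mono [OF a b]) simp_all
  moreover have "norm (4 * a * b * z ^ 2) = 4 * ((norm a * norm z) * (norm b * norm z))"
    by (simp add: norm_mult norm_power power2_eq_square)
  ultimately show "norm (4 * a * b * z ^ 2) < 1" by simp
  have "norm (2 * a * z) = 2 * (norm a * norm z)" by (simp add: norm_mult)
  then show "norm (2 * a * z) < 1" using a by linarith
  have "norm ((a + b) * z) = norm (a + b) * norm z" by (simp add: norm_mult)
  also have "\<dots> \<le> (norm a + norm b) * norm z"
    by (rule mult_right_mono [OF norm_triangle_ineq norm_ge_zero])
  finally have "norm ((a + b) * z) \<le> norm a * norm z + norm b * norm z" by (simp add: distrib_right)
  then show "norm ((a + b) * z) < 1" using a b by linarith
qed

lemma Re_pos_if_norm_lt_1: "norm (w :: complex) < 1 \<Longrightarrow> 0 < Re (1 - w)"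
  using complex_Re_le_cmod [of w] by simp

lemma csqrt_on_expansion_disc:
  assumes "norm z < expansion_radius a b"
  defines "s \<equiv> csqrt (1 - 4 * a * b * z ^ 2)"
  shows "1 - 4 * a * b * z ^ 2 \<notin> \<real>\<^sub>\<le>\<^sub>0" and "s \<noteq> 0" and "s ^ 2 = 1 - 4 * a * b * z ^ 2"
    and "1 - 2 * a * z + s \<noteq> 0"
proof -
  note bounds = expansion_radius_bounds [OF assms(1)]
  have pos: "0 < Re (1 - 4 * a * b * z ^ 2)" by (rule Re_pos_if_norm_lt_1 [OF bounds(1)])
  then show "1 - 4 * a * b * z ^ 2 \<notin> \<real>\<^sub>\<le>\<^sub>0" by (auto simp: complex_nonpos_Reals_iff)
  show "s ^ 2 = 1 - 4 * a * b * z ^ 2" by (simp add: s_def)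
  have "1 - 4 * a * b * z ^ 2 \<noteq> 0"
  proof
    assume "1 - 4 * a * b * z ^ 2 = 0"
    then show False using pos by simp
  qed
  then show "s \<noteq> 0" by (simp add: s_def)
  have "0 < Re (1 - 2 * a * z)" by (rule Re_pos_if_norm_lt_1 [OF bounds(2)])
  moreover have "0 \<le> Re s" unfolding s_def by (rule Re_csqrt)
  ultimately have pos_sum: "0 < Re (1 - 2 * a * z + s)" by simp
  show "1 - 2 * a * z + s \<noteq> 0"
  proof
    assume "1 - 2 * a * z + s = 0"
    then have "Re (1 - 2 * a * z + s) = 0" by (simp only: zero_complex.sel(1))
    then show False using pos_sum by linarith
  qed
qed

lemma central_fps_times_sqrt:
  assumes "norm z < expansion_radius a b"
  shows "eval_fps (central_fps a b) z * csqrt (1 - 4 * a * b * z ^ 2) = 1"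
proof -
  let ?T = "eval_fps (central_fps a b)" and ?T' = "eval_fps (fps_deriv (central_fps a b))"
  let ?s = "\<lambda>z. csqrt (1 - 4 * a * b * z ^ 2)"
  have "((\<lambda>z. ?T z * ?s z) has_field_derivative 0) (at x)" if x: "norm x < expansion_radius a b" for x
  proof -
    note sq = csqrt_on_expansion_disc [OF x]
    have T: "ereal (norm x) < fps_conv_radius (central_fps a b)"
      by (rule expansion_radius_lt_conv_radius [OF x fps_conv_radius_central_fps])
    have T': "ereal (norm x) < fps_conv_radius (fps_deriv (central_fps a b))"
      using expansion_radius_lt_conv_radius [OF x fps_conv_radius_central_fps] fps_conv_radius_deriv
      by (rule less_le_trans)
    have "fps_of_poly [:1, 0, - (4 * a * b):] * fps_deriv (central_fps a b)
        = fps_of_poly [:0, 4 * a * b:] * central_fps a b + fps_of_poly 0"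
      using central_fps_ode by simp
    from eval_fps_poly_identity [OF this T' T]
    have ode: "?T' x * (1 - 4 * a * b * x ^ 2) = 4 * a * b * x * ?T x"
      by (simp add: power2_eq_square algebra_simps)
    have "((\<lambda>z. 1 - 4 * a * b * z ^ 2) has_field_derivative - (8 * a * b * x)) (at x)"
      by (auto intro!: derivative_eq_intros)
    from has_field_derivative_csqrt' [OF this sq(1)]
    have "((\<lambda>z. ?T z * ?s z) has_field_derivative
        ?T x * (- (8 * a * b * x) / (2 * ?s x)) + ?T' x * ?s x) (at x)"
      by (rule DERIV_mult' [OF has_field_derivative_eval_fps [OF T]])
    moreover have "?T x * (- (8 * a * b * x) / (2 * ?s x)) + ?T' x * ?s x
        = (?T' x * (?s x) ^ 2 - 4 * a * b * x * ?T x) / ?s x"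
      using sq(2) by (simp add: field_simps power2_eq_square)
    moreover have "?T' x * (?s x) ^ 2 - 4 * a * b * x * ?T x = 0"
      using ode sq(3) by simp
    ultimately show ?thesis by simp
  qed
  then have "?T z * ?s z = ?T 0 * ?s 0"
    by (rule eq_at_0_if_deriv_zero_on_ball [OF _ assms])
  then show ?thesis by (simp add: eval_fps_at_0 central_fps_def central_term_def)
qed

text \<open>\<open>T\<close>, \<open>P\<close> and \<open>D\<close> stand for the values of \<open>central_fps\<close>, \<open>upper_binomial_fps\<close> and the
  derivative of \<open>upper_binomial_log_fps\<close>; the right-hand side is the logarithmic derivative
  of \<open>2 / (1 - 2 A z + s)\<close>.\<close>

lemma log_derivative_algebra:
  fixes A B z s P T D :: complex
  assumes s2: "s ^ 2 = 1 - 4 * A * B * z ^ 2" and s0: "s \<noteq> 0" and Q: "1 - (A + B) * z \<noteq> 0"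
    and z0: "z \<noteq> 0" and Ts: "T * s = 1"
    and P: "(1 - (A + B) * z) * P = (1 / 2 - B * z) * T + 1 / 2" and D: "z * D = P - 1"
  shows "D * (1 - 2 * A * z + s) = 2 * A + 4 * A * B * z / s"
proof -
  let ?Q = "1 - (A + B) * z"
  have h1: "2 * s * ?Q * P = s + 1 - 2 * B * z"
  proof -
    have "2 * s * (?Q * P) = 2 * s * ((1 / 2 - B * z) * T + 1 / 2)" by (simp only: P)
    also have "\<dots> = s + T * s - 2 * B * z * (T * s)" by (simp add: algebra_simps)
    finally show ?thesis using Ts by (simp add: algebra_simps)
  qed
  have h2: "(1 - s - 2 * B * z + 2 * (A + B) * z * s) * (1 - 2 * A * z + s) = 4 * A * z * (s + 2 * B * z) * ?Q"
  proof -
    have "(1 - s - 2 * B * z + 2 * (A + B) * z * s) * (1 - 2 * A * z + s) - 4 * A * z * (s + 2 * B * z) * ?Q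
       = (s ^ 2 - (1 - 4 * A * B * z ^ 2)) * (2 * (A + B) * z - 1)"
      by algebra
    then show ?thesis using s2 by simp
  qed
  have "2 * ?Q * (s * (z * D) * (1 - 2 * A * z + s)) = 2 * ?Q * (z * (2 * A * s + 4 * A * B * z))"
    unfolding D using h1 h2 by algebra
  then have "s * (z * D) * (1 - 2 * A * z + s) = z * (2 * A * s + 4 * A * B * z)"
    using Q by simp
  then have "(D * (1 - 2 * A * z + s) * s) * z = (2 * A * s + 4 * A * B * z) * z"
    by (simp add: algebra_simps)
  then have "D * (1 - 2 * A * z + s) * s = 2 * A * s + 4 * A * B * z"
    using z0 mult_right_cancel by blast
  then show ?thesis using s0 by (simp add: field_simps)
qed

lemma upper_binomial_log_fps_deriv_eq:
  assumes z: "norm z < expansion_radius a b"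
  defines "s \<equiv> csqrt (1 - 4 * a * b * z ^ 2)"
  shows "eval_fps (fps_deriv (upper_binomial_log_fps a b)) z * (1 - 2 * a * z + s)
           = 2 * a + 4 * a * b * z / s"
proof (cases "z = 0")
  case True
  then show ?thesis
    by (simp add: s_def eval_fps_at_0 upper_binomial_log_fps_def upper_binomial_def)
next
  case False
  note sq = csqrt_on_expansion_disc [OF z, folded s_def]
  have P: "ereal (norm z) < fps_conv_radius (upper_binomial_fps a b)"
    by (rule expansion_radius_lt_conv_radius [OF z fps_conv_radius_upper_binomial_fps])
  have T: "ereal (norm z) < fps_conv_radius (central_fps a b)"
    by (rule expansion_radius_lt_conv_radius [OF z fps_conv_radius_central_fps])
  have G': "ereal (norm z) < fps_conv_radius (fps_deriv (upper_binomial_log_fps a b))"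
    using expansion_radius_lt_conv_radius [OF z fps_conv_radius_upper_binomial_log_fps] fps_conv_radius_deriv
    by (rule less_le_trans)
  have "1 - (a + b) * z \<noteq> 0" using expansion_radius_bounds(3) [OF z] by auto
  moreover have "eval_fps (central_fps a b) z * s = 1"
    unfolding s_def by (rule central_fps_times_sqrt [OF z])
  moreover have "(1 - (a + b) * z) * eval_fps (upper_binomial_fps a b) z
      = (1 / 2 - b * z) * eval_fps (central_fps a b) z + 1 / 2"
    using eval_fps_poly_identity [OF upper_binomial_fps_eq P T] by (simp add: algebra_simps)
  moreover have "z * eval_fps (fps_deriv (upper_binomial_log_fps a b)) z = eval_fps (upper_binomial_fps a b) z - 1"
    using eval_fps_poly_identity [OF upper_binomial_log_fps_deriv G' P] by simp
  ultimately show ?thesis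
    using log_derivative_algebra [OF sq(3) sq(2)] False by blast
qed

lemma exp_upper_binomial_log_fps:
  assumes "norm z < expansion_radius a b"
  shows "exp (eval_fps (upper_binomial_log_fps a b) z) = 2 / (1 - 2 * a * z + csqrt (1 - 4 * a * b * z ^ 2))"
proof -
  let ?G = "eval_fps (upper_binomial_log_fps a b)" and ?G' = "eval_fps (fps_deriv (upper_binomial_log_fps a b))"
  let ?s = "\<lambda>z. csqrt (1 - 4 * a * b * z ^ 2)"
  have "((\<lambda>z. exp (?G z) * (1 - 2 * a * z + ?s z)) has_field_derivative 0) (at x)"
    if x: "norm x < expansion_radius a b" for x
  proof -
    note sq = csqrt_on_expansion_disc [OF x]
    have G: "ereal (norm x) < fps_conv_radius (upper_binomial_log_fps a b)"
      by (rule expansion_radius_lt_conv_radius [OF x fps_conv_radius_upper_binomial_log_fps])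
    have "((\<lambda>z. 1 - 4 * a * b * z ^ 2) has_field_derivative - (8 * a * b * x)) (at x)"
      by (auto intro!: derivative_eq_intros)
    from has_field_derivative_csqrt' [OF this sq(1)]
    have "((\<lambda>z. 1 - 2 * a * z + ?s z) has_field_derivative - (2 * a) + - (8 * a * b * x) / (2 * ?s x)) (at x)"
      by (rule DERIV_add [rotated]) (auto intro!: derivative_eq_intros)
    then have "((\<lambda>z. exp (?G z) * (1 - 2 * a * z + ?s z)) has_field_derivative
        exp (?G x) * (- (2 * a) + - (8 * a * b * x) / (2 * ?s x)) + exp (?G x) * ?G' x * (1 - 2 * a * x + ?s x)) (at x)"
      by (rule DERIV_mult' [OF DERIV_fun_exp [OF has_field_derivative_eval_fps [OF G]]])
    moreover have "exp (?G x) * (- (2 * a) + - (8 * a * b * x) / (2 * ?s x)) + exp (?G x) * ?G' x * (1 - 2 * a * x + ?s x)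
        = exp (?G x) * (?G' x * (1 - 2 * a * x + ?s x) - (2 * a + 4 * a * b * x / ?s x))"
      by (simp add: algebra_simps)
    ultimately show ?thesis using upper_binomial_log_fps_deriv_eq [OF x] by simp
  qed
  then have "exp (?G z) * (1 - 2 * a * z + ?s z) = exp (?G 0) * (1 - 2 * a * 0 + ?s 0)"
    by (rule eq_at_0_if_deriv_zero_on_ball [OF _ assms])
  then show ?thesis
    using csqrt_on_expansion_disc(4) [OF assms] by (simp add: eval_fps_at_0 upper_binomial_log_fps_def field_simps)
qed

theorem exp_upper_binomial_series:
  fixes a b :: complex
  assumes "norm z < expansion_radius a b"
  shows "(\<lambda>n. upper_binomial a b (Suc n) / of_nat (Suc n) * z ^ Suc n) sums
           eval_fps (upper_binomial_log_fps a b) z"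
    and "exp (\<Sum>n. upper_binomial a b (Suc n) / of_nat (Suc n) * z ^ Suc n)
           = 2 / (1 - 2 * a * z + csqrt (1 - 4 * a * b * z ^ 2))"
proof -
  have "ereal (norm z) < fps_conv_radius (upper_binomial_log_fps a b)"
    by (rule expansion_radius_lt_conv_radius [OF assms fps_conv_radius_upper_binomial_log_fps])
  from sums_eval_fps [OF this]
  have "(\<lambda>n. fps_nth (upper_binomial_log_fps a b) (Suc n) * z ^ Suc n) sums
      eval_fps (upper_binomial_log_fps a b) z"
    by (subst sums_Suc_iff) (simp add: upper_binomial_log_fps_def)
  then show sums: "(\<lambda>n. upper_binomial a b (Suc n) / of_nat (Suc n) * z ^ Suc n) sums
           eval_fps (upper_binomial_log_fps a b) z"
    by (simp add: upper_binomial_log_fps_def del: of_nat_Suc)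
  show "exp (\<Sum>n. upper_binomial a b (Suc n) / of_nat (Suc n) * z ^ Suc n)
           = 2 / (1 - 2 * a * z + csqrt (1 - 4 * a * b * z ^ 2))"
    using exp_upper_binomial_log_fps [OF assms] sums_unique [OF sums] by simp
qed

theorem proposition3p2:
  fixes M :: nat
  shows "\<exists>r>0. \<forall>z::complex. norm z < r \<longrightarrow>
     summable (\<lambda>n. of_nat (p_plus M (Suc n)) / of_nat (Suc n) * z ^ Suc n) \<and>
     summable (\<lambda>n. of_nat (p_minus M (Suc n)) / of_nat (Suc n) * z ^ Suc n) \<and>
     zeta (p_plus M) z = 2 / (1 - 4 * of_nat M * z + csqrt (1 - 8 * of_nat M * z ^ 2)) \<and>
     zeta (p_minus M) z = 2 / (1 - 4 * z + csqrt (1 - 8 * of_nat M * z ^ 2))"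
proof (intro exI conjI allI impI)
  let ?r = "min (expansion_radius (of_nat (2 * M)) 1) (expansion_radius 2 (of_nat M))"
  show "?r > 0" by (simp add: expansion_radius_pos)
  fix z :: complex
  assume "norm z < ?r"
  then have z_plus: "norm z < expansion_radius (of_nat (2 * M)) 1"
    and z_minus: "norm z < expansion_radius 2 (of_nat M)" by simp_all
  have plus: "of_nat (p_plus M (Suc n)) = upper_binomial (of_nat (2 * M)) (1 :: complex) (Suc n)" for n
    using of_nat_upper_binomial [of "2 * M" 1 "Suc n"] by (simp add: p_plus_eq_upper_binomial)
  have minus: "of_nat (p_minus M (Suc n)) = upper_binomial (2 :: complex) (of_nat M) (Suc n)" for n
    using of_nat_upper_binomial [of 2 M "Suc n"] by (simp add: p_minus_eq_upper_binomial)
  note series_plus = exp_upper_binomial_series [OF z_plus] and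
    series_minus = exp_upper_binomial_series [OF z_minus]
  show "summable (\<lambda>n. of_nat (p_plus M (Suc n)) / of_nat (Suc n) * z ^ Suc n)"
    using sums_summable [OF series_plus(1)] by (simp only: plus)
  show "summable (\<lambda>n. of_nat (p_minus M (Suc n)) / of_nat (Suc n) * z ^ Suc n)"
    using sums_summable [OF series_minus(1)] by (simp only: minus)
  show "zeta (p_plus M) z = 2 / (1 - 4 * of_nat M * z + csqrt (1 - 8 * of_nat M * z ^ 2))"
    using series_plus(2) unfolding zeta_def plus by simp
  show "zeta (p_minus M) z = 2 / (1 - 4 * z + csqrt (1 - 8 * of_nat M * z ^ 2))"
    using series_minus(2) unfolding zeta_def minus by simp
qed

end
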